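(* Given an undirected graph $G$ with $n$ nodes, there is an $O(n^2+t)$-time algorithm that lists all the $4$-cycles of $G$, where $t$ is the number of $4$-cycles in $G$.
   Context: Graphs are simple, unweighted and undirected. A $4$-cycle is a cycle on four distinct nodes. "Listing" means outputting every $4$-cycle of the graph. Running time is measured in the standard RAM model with the graph given by adjacency lists. *)

theory Defs
  imports Main
begin

(* A unit-cost word RAM (Cook--Reckhow style random access machine).
   Memory cells are indexed by nat and hold integers; every cell doubles as a
   register.
   The word-size restriction of the standard word RAM is imposed in the main
   theorem by bounding every stored value by a polynomial in n. *)

datatype instr =
    LoadConst nat int
  | Add nat nat nat
  | Sub nat nat nat
  | LoadInd nat nat
  | StoreInd nat nat
  | JumpZero nat nat
  | JumpPos nat nat
  | Goto nat
  | Output nat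
  | Halt

type_synonym prog = "instr list"

record conf =
  pc  :: nat
  mem :: "nat \<Rightarrow> int"
  outp :: "int list"

definition halted :: "prog \<Rightarrow> conf \<Rightarrow> bool" where
  "halted P c \<longleftrightarrow> pc c \<ge> length P \<or> P ! pc c = Halt"

fun exec :: "instr \<Rightarrow> conf \<Rightarrow> conf" where
  "exec (LoadConst i k) c = c\<lparr>pc := Suc (pc c), mem := (mem c)(i := k)\<rparr>"
| "exec (Add i j k) c = c\<lparr>pc := Suc (pc c), mem := (mem c)(i := mem c j + mem c k)\<rparr>"
| "exec (Sub i j k) c = c\<lparr>pc := Suc (pc c), mem := (mem c)(i := mem c j - mem c k)\<rparr>"
| "exec (LoadInd i j) c = c\<lparr>pc := Suc (pc c), mem := (mem c)(i := mem c (nat (mem c j)))\<rparr>"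
| "exec (StoreInd i j) c = c\<lparr>pc := Suc (pc c), mem := (mem c)(nat (mem c i) := mem c j)\<rparr>"
| "exec (JumpZero i l) c = c\<lparr>pc := (if mem c i = 0 then l else Suc (pc c))\<rparr>"
| "exec (JumpPos i l) c = c\<lparr>pc := (if mem c i > 0 then l else Suc (pc c))\<rparr>"
| "exec (Goto l) c = c\<lparr>pc := l\<rparr>"
| "exec (Output i) c = c\<lparr>pc := Suc (pc c), outp := outp c @ [mem c i]\<rparr>"
| "exec Halt c = c"

definition step :: "prog \<Rightarrow> conf \<Rightarrow> conf" where
  "step P c = (if halted P c then c else exec (P ! pc c) c)"

definition valid_adj :: "nat list list \<Rightarrow> bool" where
  "valid_adj adj \<longleftrightarrow>
     (\<forall>v < length adj. distinct (adj ! v) \<and> set (adj ! v) \<subseteq> {..<length adj}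
        \<and> v \<notin> set (adj ! v)) \<and>
     (\<forall>u < length adj. \<forall>v < length adj. u \<in> set (adj ! v) \<longleftrightarrow> v \<in> set (adj ! u))"

definition adj_edge :: "nat list list \<Rightarrow> nat \<Rightarrow> nat \<Rightarrow> bool" where
  "adj_edge adj u v \<longleftrightarrow> v < length adj \<and> u \<in> set (adj ! v)"

(* Memory layout of the input:
   cell 0: n;  cell 1+v: address of the list of v;
   a list is stored as its length followed by its entries. *)
fun list_offsets :: "nat \<Rightarrow> nat list list \<Rightarrow> nat list" where
  "list_offsets a [] = []"
| "list_offsets a (l # ls) = a # list_offsets (a + 1 + length l) ls"

definition encode_adj :: "nat list list \<Rightarrow> int list" where
  "encode_adj adj =
     [int (length adj)] @ map int (list_offsets (1 + length adj) adj)
     @ concat (map (\<lambda>l. int (length l) # map int l) adj)"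

definition init_conf :: "nat list list \<Rightarrow> conf" where
  "init_conf adj = \<lparr>pc = 0,
     mem = (\<lambda>a. if a < length (encode_adj adj) then encode_adj adj ! a else 0),
     outp = []\<rparr>"

definition is_4cycle :: "(nat \<Rightarrow> nat \<Rightarrow> bool) \<Rightarrow> nat \<Rightarrow> nat \<Rightarrow> nat \<Rightarrow> nat \<Rightarrow> bool" where
  "is_4cycle E a b c d \<longleftrightarrow> distinct [a, b, c, d] \<and> E a b \<and> E b c \<and> E c d \<and> E d a"

(* a 4-cycle as a subgraph is identified with its edge set *)
definition cyc_edges :: "nat \<Rightarrow> nat \<Rightarrow> nat \<Rightarrow> nat \<Rightarrow> nat set set" where
  "cyc_edges a b c d = {{a, b}, {b, c}, {c, d}, {d, a}}"

definition four_cycles :: "(nat \<Rightarrow> nat \<Rightarrow> bool) \<Rightarrow> nat set set set" where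
  "four_cycles E = {cyc_edges a b c d | a b c d. is_4cycle E a b c d}"

(* output: consecutive blocks of four integers, each a 4-cycle in cyclic order *)
fun quads :: "int list \<Rightarrow> (int \<times> int \<times> int \<times> int) list" where
  "quads (a # b # c # d # r) = (a, b, c, d) # quads r"
| "quads _ = []"

definition lists_all_4cycles :: "nat list list \<Rightarrow> int list \<Rightarrow> bool" where
  "lists_all_4cycles adj out \<longleftrightarrow>
     4 dvd length out \<and>
     (\<forall>(a, b, c, d) \<in> set (quads out).
        0 \<le> a \<and> 0 \<le> b \<and> 0 \<le> c \<and> 0 \<le> d \<and>
        is_4cycle (adj_edge adj) (nat a) (nat b) (nat c) (nat d)) \<and>
     four_cycles (adj_edge adj) \<subseteq>
        (\<lambda>(a, b, c, d). cyc_edges (nat a) (nat b) (nat c) (nat d)) ` set (quads out)"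

end

(*
  For every vertex u the lister scans the neighbours v of u in adjacency order. For each
  neighbour w \<noteq> u of v it reports the 4-cycles u v' w v for the earlier neighbours v' of u that are
  adjacent to w, which it keeps in a bucket for w, and then appends v to that bucket. Every report is
  a 4-cycle, and a 4-cycle a b c d is reported from a with the later of b and d in the role of v.

  Every wedge u v w examined either returns to u (once per v), is the first wedge reaching w
  (once per w) or reports a cycle; with O(n) to empty the buckets for each u, the running time is
  O(n\<^sup>2 + number of reports). Each cycle gives at most 4\<^sup>4 reports.

  The algorithm is a word-RAM program, verified by symbolic execution of its straight-line segments
  and by loop invariants. All stored values are bounded by the size O(n\<^sup>2) of the memory used.
*)

theory Submission
  imports Defs
begin

lemma concat_map_nth:
  assumes "v < length xs" "j < length (g (xs ! v))"
  shows "concat (map g xs) ! ((\<Sum>x\<leftarrow>take v xs. length (g x)) + j) = g (xs ! v) ! j"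
  using assms
proof (induction xs arbitrary: v)
  case (Cons x xs)
  then show ?case by (cases v) (auto simp: nth_append add.assoc)
qed simp

lemma length_le_card_subset:
  "distinct xs \<Longrightarrow> set xs \<subseteq> A \<Longrightarrow> finite A \<Longrightarrow> length xs \<le> card A"
  by (metis card_mono distinct_card)

lemma nth_notin_set_take: "distinct xs \<Longrightarrow> i < length xs \<Longrightarrow> xs ! i \<notin> set (take i xs)"
  by (metis distinct_take id_take_nth_drop not_distinct_conv_prefix)

lemma in_set_take_nth: "i < j \<Longrightarrow> j \<le> length xs \<Longrightarrow> xs ! i \<in> set (take j xs)"
  by (metis in_set_conv_nth length_take min.absorb2 nth_take)

lemma distinct_concat_map:
  assumes "distinct xs" "\<And>x. x \<in> set xs \<Longrightarrow> distinct (f x)"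
    and "\<And>x y. x \<in> set xs \<Longrightarrow> y \<in> set xs \<Longrightarrow> x \<noteq> y \<Longrightarrow> set (f x) \<inter> set (f y) = {}"
  shows "distinct (concat (map f xs))"
  using assms
proof (induction xs)
  case (Cons x xs)
  then have "set (f x) \<inter> set (concat (map f xs)) = {}" by fastforce
  with Cons show ?case by simp
qed simp

lemma sum_list_map_conv_sum_nth: "(\<Sum>x\<leftarrow>xs. f x) = (\<Sum>j<length xs. f (xs ! j))"
  by (simp add: sum_list_sum_nth atLeast0LessThan)

section \<open>Adjacency-list encoding\<close>

definition list_addr :: "nat list list \<Rightarrow> nat \<Rightarrow> nat" where
  "list_addr adj v = 1 + length adj + (\<Sum>l\<leftarrow>take v adj. 1 + length l)"

lemma length_list_offsets [simp]: "length (list_offsets a ls) = length ls"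
  by (induction ls arbitrary: a) auto

lemma list_offsets_nth:
  "v < length ls \<Longrightarrow> list_offsets a ls ! v = a + (\<Sum>l\<leftarrow>take v ls. 1 + length l)"
  by (induction ls arbitrary: a v) (auto simp: nth_Cons split: nat.split)

lemma length_encode_adj: "length (encode_adj adj) = list_addr adj (length adj)"
  unfolding encode_adj_def list_addr_def by (simp add: length_concat comp_def)

lemma encode_adj_nth:
  assumes "v < length adj" "j \<le> length (adj ! v)"
  shows "encode_adj adj ! (list_addr adj v + j) = (int (length (adj ! v)) # map int (adj ! v)) ! j"
proof -
  let ?g = "\<lambda>l. int (length l) # map int l"
  have "concat (map ?g adj) ! ((\<Sum>l\<leftarrow>take v adj. length (?g l)) + j) = ?g (adj ! v) ! j"
    using assms by (intro concat_map_nth) auto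
  then show ?thesis
    unfolding encode_adj_def list_addr_def by (simp add: nth_append add.assoc)
qed

lemma init_mem_0: "mem (init_conf adj) 0 = int (length adj)"
  unfolding init_conf_def encode_adj_def by simp

lemma list_addr_Suc:
  "v < length adj \<Longrightarrow> list_addr adj (Suc v) = list_addr adj v + 1 + length (adj ! v)"
  unfolding list_addr_def by (simp add: take_Suc_conv_app_nth)

lemma list_addr_mono: "v \<le> w \<Longrightarrow> list_addr adj v \<le> list_addr adj w"
  unfolding list_addr_def by (auto simp: le_iff_add take_add)

lemma list_addr_ge: "length adj < list_addr adj v"
  unfolding list_addr_def by simp

lemma list_addr_0: "list_addr adj 0 = length adj + 1"
  unfolding list_addr_def by simp

lemma list_end_less_list_addr:
  assumes "v < w" "w \<le> length adj"
  shows "list_addr adj v + length (adj ! v) < list_addr adj w"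
  using list_addr_mono[of "Suc v" w adj] list_addr_Suc[of v adj] assms by simp

lemma list_cell_inj:
  assumes "v < length adj" "v' < length adj" "j \<le> length (adj ! v)" "j' \<le> length (adj ! v')"
    and "list_addr adj v + j = list_addr adj v' + j'"
  shows "v = v' \<and> j = j'"
  using list_end_less_list_addr[of v v' adj] list_end_less_list_addr[of v' v adj] assms
  by (cases v v' rule: linorder_cases) auto

lemma valid_adjD:
  assumes "valid_adj adj"
  shows "v < length adj \<Longrightarrow> distinct (adj ! v)"
    and "v < length adj \<Longrightarrow> x \<in> set (adj ! v) \<Longrightarrow> x < length adj"
    and "v < length adj \<Longrightarrow> v \<notin> set (adj ! v)"
    and "u < length adj \<Longrightarrow> v < length adj \<Longrightarrow> u \<in> set (adj ! v) \<longleftrightarrow> v \<in> set (adj ! u)"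
  using assms unfolding valid_adj_def by auto

lemma valid_adj_degree_le:
  "valid_adj adj \<Longrightarrow> v < length adj \<Longrightarrow> length (adj ! v) \<le> length adj"
  using length_le_card_subset[of "adj ! v" "{..<length adj}"] valid_adjD(1,2)[of adj v]
  by (simp add: subset_iff)

lemma nbr_less: "valid_adj adj \<Longrightarrow> u < length adj \<Longrightarrow> i < length (adj ! u) \<Longrightarrow> adj ! u ! i < length adj"
  using valid_adjD(2) by simp

lemma list_addr_end_le:
  assumes "valid_adj adj"
  shows "list_addr adj (length adj) \<le> (length adj + 1)\<^sup>2"
proof -
  let ?n = "length adj"
  have "(\<Sum>l\<leftarrow>adj. 1 + length l) \<le> (\<Sum>l\<leftarrow>adj. 1 + ?n)"
    using valid_adj_degree_le[OF assms] by (intro sum_list_mono) (auto simp: in_set_conv_nth)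
  then show ?thesis
    unfolding list_addr_def by (simp add: sum_list_triv power2_eq_square algebra_simps)
qed

lemma encode_adj_bounds:
  assumes "valid_adj adj" and "x \<in> set (encode_adj adj)"
  shows "0 \<le> x \<and> x \<le> int (list_addr adj (length adj))"
proof -
  let ?n = "length adj" and ?E = "list_addr adj (length adj)"
  have "?n \<le> ?E" using list_addr_ge[of adj ?n] by simp
  consider "x = int ?n"
    | v where "v < ?n" "x = int (list_addr adj v)"
    | l where "l \<in> set adj" "x \<in> set (int (length l) # map int l)"
    using assms(2) unfolding encode_adj_def
    by (auto simp: in_set_conv_nth list_offsets_nth list_addr_def)
  then show ?thesis
  proof cases
    case 2
    then show ?thesis using list_addr_mono[of v ?n adj] by simp
  next
    case 3
    then obtain v where "v < ?n" "l = adj ! v" by (auto simp: in_set_conv_nth)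
    then have "length l \<le> ?n" "\<forall>y\<in>set l. y < ?n"
      using valid_adjD(2)[OF assms(1)] valid_adj_degree_le[OF assms(1)] by auto
    then show ?thesis using 3(2) \<open>?n \<le> ?E\<close> by auto
  qed (use \<open>?n \<le> ?E\<close> in simp)
qed

section \<open>The listing\<close>

text \<open>\<open>partners adj u vs w\<close> is the bucket of \<open>w\<close> once the neighbours \<open>vs\<close> of \<open>u\<close> have been
  scanned.\<close>

definition partners :: "nat list list \<Rightarrow> nat \<Rightarrow> nat list \<Rightarrow> nat \<Rightarrow> nat list" where
  "partners adj u vs w = (if w = u then [] else filter (\<lambda>v'. w \<in> set (adj ! v')) vs)"

definition cycles_via_w :: "nat list list \<Rightarrow> nat \<Rightarrow> nat list \<Rightarrow> nat \<Rightarrow> nat \<Rightarrow> (nat \<times> nat \<times> nat \<times> nat) list" where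
  "cycles_via_w adj u vs v w = map (\<lambda>v'. (u, v', w, v)) (partners adj u vs w)"

definition cycles_via_v :: "nat list list \<Rightarrow> nat \<Rightarrow> nat list \<Rightarrow> nat \<Rightarrow> (nat \<times> nat \<times> nat \<times> nat) list" where
  "cycles_via_v adj u vs v = concat (map (cycles_via_w adj u vs v) (adj ! v))"

definition cycles_at :: "nat list list \<Rightarrow> nat \<Rightarrow> (nat \<times> nat \<times> nat \<times> nat) list" where
  "cycles_at adj u = concat (map (\<lambda>i. cycles_via_v adj u (take i (adj ! u)) (adj ! u ! i))
     [0..<length (adj ! u)])"

definition cycle_listing :: "nat list list \<Rightarrow> (nat \<times> nat \<times> nat \<times> nat) list" where
  "cycle_listing adj = concat (map (cycles_at adj) [0..<length adj])"

lemma set_cycle_listing: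
  "x \<in> set (cycle_listing adj) \<longleftrightarrow>
    (\<exists>u i w v'. x = (u, v', w, adj ! u ! i) \<and> u < length adj \<and> i < length (adj ! u) \<and>
       w \<in> set (adj ! (adj ! u ! i)) \<and> w \<noteq> u \<and> v' \<in> set (take i (adj ! u)) \<and> w \<in> set (adj ! v'))"
  unfolding cycle_listing_def cycles_at_def cycles_via_v_def cycles_via_w_def partners_def
  by (auto split: if_splits) (fastforce intro!: bexI)

lemma cycle_listing_sound:
  assumes "valid_adj adj" and "(a, b, c, d) \<in> set (cycle_listing adj)"
  shows "is_4cycle (adj_edge adj) a b c d"
proof -
  note valid = valid_adjD[OF assms(1)]
  from assms(2) obtain i where a: "a < length adj" and i: "i < length (adj ! a)" "d = adj ! a ! i"
    and c: "c \<in> set (adj ! d)" "c \<noteq> a" "c \<in> set (adj ! b)" and b: "b \<in> set (take i (adj ! a))"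
    unfolding set_cycle_listing by auto
  have ab: "b \<in> set (adj ! a)" and ad: "d \<in> set (adj ! a)" using i b by (auto dest: in_set_takeD)
  then have "b < length adj" "d < length adj" using valid(2)[OF a] by auto
  moreover have "c < length adj" using valid(2)[OF \<open>d < length adj\<close> c(1)] .
  moreover have "b \<noteq> d" using nth_notin_set_take[OF valid(1)[OF a] i(1)] i b by auto
  ultimately show ?thesis
    using a ab ad c valid(3,4) unfolding is_4cycle_def adj_edge_def by auto
qed

lemma cyc_edges_reverse: "cyc_edges a d c b = cyc_edges a b c d"
  unfolding cyc_edges_def by (auto simp: insert_commute)

lemma cycle_listing_complete:
  assumes "valid_adj adj" and "is_4cycle (adj_edge adj) a b c d"
  shows "cyc_edges a b c d \<in> (\<lambda>(a, b, c, d). cyc_edges a b c d) ` set (cycle_listing adj)"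
proof -
  note valid = valid_adjD[OF assms(1)]
  have n: "a < length adj" "b < length adj" "c < length adj" "d < length adj"
    and e: "a \<in> set (adj ! b)" "b \<in> set (adj ! c)" "c \<in> set (adj ! d)" "d \<in> set (adj ! a)"
    and dist: "distinct [a, b, c, d]"
    using assms(2) unfolding is_4cycle_def adj_edge_def by auto
  have cb: "c \<in> set (adj ! b)" using valid(4) n e by auto
  obtain ib where ib: "ib < length (adj ! a)" "adj ! a ! ib = b"
    using valid(4)[of b a] n e by (metis in_set_conv_nth)
  obtain id where id: "id < length (adj ! a)" "adj ! a ! id = d"
    using e(4) by (metis in_set_conv_nth)
  have listed: "(a, adj ! a ! ix, c, adj ! a ! iy) \<in> set (cycle_listing adj)"
    if "ix < iy" "iy < length (adj ! a)" "c \<in> set (adj ! (adj ! a ! ix))" "c \<in> set (adj ! (adj ! a ! iy))"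
    for ix iy
    unfolding set_cycle_listing
    using n(1) dist that in_set_take_nth[of ix iy "adj ! a"] by (intro exI) auto
  have "ib \<noteq> id" using ib id dist by auto
  then consider "ib < id" | "id < ib" by linarith
  then show ?thesis
  proof cases
    case 1
    then have "(a, b, c, d) \<in> set (cycle_listing adj)" using listed[of ib id] ib id cb e(3) by simp
    then show ?thesis by (rule rev_image_eqI) simp
  next
    case 2
    then have "(a, d, c, b) \<in> set (cycle_listing adj)" using listed[of id ib] ib id cb e(3) by simp
    then show ?thesis by (rule rev_image_eqI) (simp add: cyc_edges_reverse)
  qed
qed

lemma distinct_cycle_listing:
  assumes "valid_adj adj"
  shows "distinct (cycle_listing adj)"
proof -
  note valid = valid_adjD[OF assms]
  have via_v: "distinct (cycles_via_v adj u (take i (adj ! u)) v)" if "u < length adj" "v < length adj" for u i v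
    unfolding cycles_via_v_def cycles_via_w_def partners_def
    using valid(1)[OF that(1)] valid(1)[OF that(2)]
    by (intro distinct_concat_map) (auto simp: distinct_map inj_on_def)
  have at: "distinct (cycles_at adj u)" if u: "u < length adj" for u
    unfolding cycles_at_def
  proof (rule distinct_concat_map)
    fix i j assume "i \<in> set [0..<length (adj ! u)]" "j \<in> set [0..<length (adj ! u)]" "i \<noteq> j"
    then have "adj ! u ! i \<noteq> adj ! u ! j" using valid(1)[OF u] by (simp add: nth_eq_iff_index_eq)
    then show "set (cycles_via_v adj u (take i (adj ! u)) (adj ! u ! i)) \<inter>
        set (cycles_via_v adj u (take j (adj ! u)) (adj ! u ! j)) = {}"
      unfolding cycles_via_v_def cycles_via_w_def by auto
  qed (auto intro!: via_v[OF u] valid(2)[OF u] nth_mem)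
  show ?thesis
    unfolding cycle_listing_def
  proof (rule distinct_concat_map)
    fix u u' :: nat assume "u \<noteq> u'"
    then show "set (cycles_at adj u) \<inter> set (cycles_at adj u') = {}"
      unfolding cycles_at_def cycles_via_v_def cycles_via_w_def by auto
  qed (auto intro: at)
qed

section \<open>Output size and running time\<close>

definition cycle_tuples :: "nat list list \<Rightarrow> (nat \<times> nat \<times> nat \<times> nat) set" where
  "cycle_tuples adj = {(a, b, c, d). is_4cycle (adj_edge adj) a b c d}"

lemma finite_cycle_tuples: "finite (cycle_tuples adj)"
proof -
  let ?V = "{..<length adj}"
  have "cycle_tuples adj \<subseteq> ?V \<times> ?V \<times> ?V \<times> ?V"
    unfolding cycle_tuples_def is_4cycle_def adj_edge_def by auto
  then show ?thesis by (rule finite_subset) auto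
qed

lemma Union_cyc_edges: "\<Union>(cyc_edges a b c d) = {a, b, c, d}"
  unfolding cyc_edges_def by auto

lemma card_cycle_tuples_le: "card (cycle_tuples adj) \<le> 256 * card (four_cycles (adj_edge adj))"
proof -
  let ?f = "\<lambda>(a, b, c, d). cyc_edges a b c d"
  have image: "four_cycles (adj_edge adj) = ?f ` cycle_tuples adj"
    unfolding four_cycles_def cycle_tuples_def by auto
  have fibre: "card {x \<in> cycle_tuples adj. ?f x = S} \<le> 256"
    if S_in: "S \<in> four_cycles (adj_edge adj)" for S
  proof -
    obtain a b c d where S: "S = cyc_edges a b c d" using S_in unfolding four_cycles_def by blast
    let ?V = "{a, b, c, d}"
    have "{x \<in> cycle_tuples adj. ?f x = S} \<subseteq> ?V \<times> ?V \<times> ?V \<times> ?V"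
    proof
      fix x assume "x \<in> {x \<in> cycle_tuples adj. ?f x = S}"
      then obtain a' b' c' d' where x: "x = (a', b', c', d')" "cyc_edges a' b' c' d' = S" by auto
      then have "{a', b', c', d'} = ?V" unfolding S by (metis Union_cyc_edges)
      then show "x \<in> ?V \<times> ?V \<times> ?V \<times> ?V" unfolding x(1) by blast
    qed
    then have "card {x \<in> cycle_tuples adj. ?f x = S} \<le> card (?V \<times> ?V \<times> ?V \<times> ?V)"
      by (intro card_mono) auto
    also have "\<dots> = card ?V ^ 4" by (simp only: card_cartesian_product power4_eq_xxxx mult.assoc)
    also have "\<dots> \<le> 4 ^ 4" using card_length[of "[a, b, c, d]"] by (intro power_mono) auto
    finally show ?thesis by simp
  qed
  have "card (cycle_tuples adj) \<le> (\<Sum>S\<in>four_cycles (adj_edge adj). card {x \<in> cycle_tuples adj. ?f x = S})"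
  proof -
    have partition: "cycle_tuples adj = (\<Union>S\<in>four_cycles (adj_edge adj). {x \<in> cycle_tuples adj. ?f x = S})"
      unfolding image by auto
    have "finite (four_cycles (adj_edge adj))"
      unfolding image using finite_cycle_tuples by (rule finite_imageI)
    then show ?thesis by (subst partition) (rule card_UN_le)
  qed
  also have "\<dots> \<le> (\<Sum>S\<in>four_cycles (adj_edge adj). 256)" by (rule sum_mono) (rule fibre)
  finally show ?thesis by simp
qed

lemma length_cycle_listing_le:
  assumes "valid_adj adj"
  shows "length (cycle_listing adj) \<le> 256 * card (four_cycles (adj_edge adj))"
proof -
  have "length (cycle_listing adj) = card (set (cycle_listing adj))"
    using distinct_cycle_listing[OF assms] by (simp add: distinct_card)
  also have "\<dots> \<le> card (cycle_tuples adj)"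
    using cycle_listing_sound[OF assms] finite_cycle_tuples
    by (intro card_mono) (auto simp: cycle_tuples_def)
  finally show ?thesis using card_cycle_tuples_le by (rule order.trans)
qed

text \<open>Upper bounds on the steps the lister spends per wedge, per neighbour, per vertex and in total.\<close>

definition cost_w :: "nat list list \<Rightarrow> nat \<Rightarrow> nat list \<Rightarrow> nat \<Rightarrow> nat" where
  "cost_w adj u vs w = 30 + 10 * length (partners adj u vs w)"

definition cost_v :: "nat list list \<Rightarrow> nat \<Rightarrow> nat list \<Rightarrow> nat \<Rightarrow> nat" where
  "cost_v adj u vs v = 20 + (\<Sum>w\<leftarrow>adj ! v. cost_w adj u vs w)"

definition cost_at :: "nat list list \<Rightarrow> nat \<Rightarrow> nat" where
  "cost_at adj u = 30 + 10 * length adj +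
     (\<Sum>i<length (adj ! u). cost_v adj u (take i (adj ! u)) (adj ! u ! i))"

definition cost_listing :: "nat list list \<Rightarrow> nat" where
  "cost_listing adj = 50 + 20 * length adj + (\<Sum>u<length adj. cost_at adj u)"

lemma first_wedges_le:
  assumes "valid_adj adj" and u: "u < length adj"
  shows "(\<Sum>i<length (adj ! u). card {w \<in> set (adj ! (adj ! u ! i)).
    w \<noteq> u \<and> partners adj u (take i (adj ! u)) w = []}) \<le> length adj"
proof -
  note valid = valid_adjD[OF assms(1)]
  let ?d = "length (adj ! u)" and ?N = "\<lambda>i. set (adj ! (adj ! u ! i))"
  let ?S = "SIGMA i:{..<?d}. {w \<in> ?N i. w \<noteq> u \<and> partners adj u (take i (adj ! u)) w = []}"
  have "(\<Sum>i<?d. card {w \<in> ?N i. w \<noteq> u \<and> partners adj u (take i (adj ! u)) w = []}) = card ?S"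
    by (simp add: card_SigmaI)
  also have "\<dots> \<le> card {..<length adj}"
  proof (rule card_inj_on_le)
    have later_has_partner: "partners adj u (take j (adj ! u)) w \<noteq> []"
      if "i < j" "j < ?d" "w \<in> ?N i" "w \<noteq> u" for i j w
    proof -
      have "adj ! u ! i \<in> set (take j (adj ! u))"
        using in_set_take_nth[of i j "adj ! u"] that by simp
      then have "adj ! u ! i \<in> set (partners adj u (take j (adj ! u)) w)"
        using that unfolding partners_def by simp
      then show ?thesis by auto
    qed
    show "inj_on snd ?S"
      by (intro inj_onI) (clarsimp, metis later_has_partner linorder_neqE_nat)
    show "snd ` ?S \<subseteq> {..<length adj}"
      using valid(2) nbr_less[OF assms] by fastforce
  qed simp
  finally show ?thesis by simp
qed

lemma wedges_at_le:
  assumes "valid_adj adj" and u: "u < length adj"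
  shows "(\<Sum>i<length (adj ! u). length (adj ! (adj ! u ! i)))
    \<le> length (adj ! u) + length adj + length (cycles_at adj u)"
proof -
  note valid = valid_adjD[OF assms(1)]
  define d where "d = length (adj ! u)"
  define N where "N i = set (adj ! (adj ! u ! i))" for i
  define L where "L i w = length (partners adj u (take i (adj ! u)) w)" for i w
  define fresh where "fresh i w = (if w \<noteq> u \<and> L i w = 0 then 1 else 0 :: nat)" for i w
  have deg: "length (adj ! (adj ! u ! i)) = card (N i)" if "i < d" for i
    unfolding N_def using valid(1)[OF nbr_less[OF assms that[unfolded d_def]]] by (simp add: distinct_card)
  have cycles: "length (cycles_at adj u) = (\<Sum>i<d. \<Sum>w\<in>N i. L i w)"
    unfolding cycles_at_def cycles_via_v_def cycles_via_w_def L_def N_def d_def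
    by (simp add: length_concat comp_def interv_sum_list_conv_sum_set_nat atLeast0LessThan
        sum_list_distinct_conv_sum_set valid(1) nbr_less[OF assms])
  have returns: "(\<Sum>w\<in>N i. if w = u then 1 else 0 :: nat) \<le> 1" for i
    unfolding N_def by (simp add: sum.If_cases card_le_Suc0_iff_eq)
  have "(\<Sum>i<d. \<Sum>w\<in>N i. fresh i w) \<le> length adj"
    using first_wedges_le[OF assms] unfolding fresh_def N_def L_def d_def
    by (simp add: sum.If_cases Int_def)
  moreover have "(\<Sum>i<d. length (adj ! (adj ! u ! i))) = (\<Sum>i<d. \<Sum>w\<in>N i. 1)"
    using deg by simp
  moreover have "\<dots> \<le> (\<Sum>i<d. \<Sum>w\<in>N i. (if w = u then 1 else 0) + fresh i w + L i w)"
    unfolding fresh_def by (intro sum_mono) auto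
  moreover have "\<dots> = (\<Sum>i<d. \<Sum>w\<in>N i. if w = u then 1 else 0) + (\<Sum>i<d. \<Sum>w\<in>N i. fresh i w)
      + length (cycles_at adj u)"
    unfolding cycles by (simp add: sum.distrib)
  ultimately show ?thesis
    using sum_mono[of "{..<d}" "\<lambda>i. \<Sum>w\<in>N i. if w = u then 1 else 0" "\<lambda>_. 1", OF returns]
    unfolding d_def by simp
qed

lemma cost_v_eq:
  "cost_v adj u vs v = 20 + 30 * length (adj ! v) + 10 * (\<Sum>w\<leftarrow>adj ! v. length (partners adj u vs w))"
  unfolding cost_v_def cost_w_def by (simp add: sum_list_addf sum_list_const_mult sum_list_triv)

lemma length_cycles_at:
  "length (cycles_at adj u) = (\<Sum>i<length (adj ! u).
     \<Sum>w\<leftarrow>adj ! (adj ! u ! i). length (partners adj u (take i (adj ! u)) w))"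
  unfolding cycles_at_def cycles_via_v_def cycles_via_w_def
  by (simp add: length_concat comp_def interv_sum_list_conv_sum_set_nat atLeast0LessThan)

lemma cost_at_le:
  assumes "valid_adj adj" "u < length adj"
  shows "cost_at adj u \<le> 30 + 90 * length adj + 40 * length (cycles_at adj u)"
proof -
  have "cost_at adj u = 30 + 10 * length adj + 20 * length (adj ! u)
      + 30 * (\<Sum>i<length (adj ! u). length (adj ! (adj ! u ! i))) + 10 * length (cycles_at adj u)"
    unfolding cost_at_def cost_v_eq length_cycles_at by (simp add: sum.distrib sum_distrib_left)
  then show ?thesis
    using wedges_at_le[OF assms] valid_adj_degree_le[OF assms] by linarith
qed

lemma cost_listing_le:
  assumes "valid_adj adj"
  shows "cost_listing adj \<le> 200 * ((length adj)\<^sup>2 + length (cycle_listing adj)) + 50"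
proof -
  let ?n = "length adj"
  have "(\<Sum>u<?n. cost_at adj u) \<le> (\<Sum>u<?n. 30 + 90 * ?n + 40 * length (cycles_at adj u))"
    using cost_at_le[OF assms] by (intro sum_mono) simp
  also have "\<dots> = 30 * ?n + 90 * ?n * ?n + 40 * length (cycle_listing adj)"
    unfolding cycle_listing_def
    by (simp add: sum.distrib sum_distrib_left length_concat comp_def interv_sum_list_conv_sum_set_nat
        atLeast0LessThan algebra_simps)
  finally show ?thesis
    unfolding cost_listing_def power2_eq_square distrib_left using le_square[of ?n] by linarith
qed

text \<open>The buckets while the \<open>j\<close>-th neighbour of the \<open>i\<close>-th neighbour of \<open>u\<close> is processed.\<close>

definition partners_upto :: "nat list list \<Rightarrow> nat \<Rightarrow> nat \<Rightarrow> nat \<Rightarrow> nat \<Rightarrow> nat list" where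
  "partners_upto adj u i j w = partners adj u (take i (adj ! u)) w @
     (if w \<noteq> u \<and> w \<in> set (take j (adj ! (adj ! u ! i))) then [adj ! u ! i] else [])"

lemma partners_upto_0: "partners_upto adj u i 0 = partners adj u (take i (adj ! u))"
  unfolding partners_upto_def by auto

lemma partners_upto_end:
  "i < length (adj ! u) \<Longrightarrow>
    partners_upto adj u i (length (adj ! (adj ! u ! i))) = partners adj u (take (Suc i) (adj ! u))"
  unfolding partners_upto_def partners_def by (auto simp: take_Suc_conv_app_nth)

context
  fixes adj u i j
  assumes valid: "valid_adj adj" and u: "u < length adj" and i: "i < length (adj ! u)"
    and j: "j < length (adj ! (adj ! u ! i))"
begin

lemma nbr_nbr_notin_take: "adj ! (adj ! u ! i) ! j \<notin> set (take j (adj ! (adj ! u ! i)))"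
  using nth_notin_set_take[OF valid_adjD(1)[OF valid nbr_less[OF valid u i]] j] .

lemma partners_upto_current:
  "partners_upto adj u i j (adj ! (adj ! u ! i) ! j) = partners adj u (take i (adj ! u)) (adj ! (adj ! u ! i) ! j)"
  using nbr_nbr_notin_take unfolding partners_upto_def by simp

lemma partners_upto_Suc_self:
  "adj ! (adj ! u ! i) ! j = u \<Longrightarrow> partners_upto adj u i (Suc j) = partners_upto adj u i j"
  unfolding partners_upto_def using j by (auto simp: take_Suc_conv_app_nth)

lemma partners_upto_Suc:
  assumes "w = adj ! (adj ! u ! i) ! j" "w \<noteq> u"
  shows "partners_upto adj u i (Suc j) = (partners_upto adj u i j)(w := partners_upto adj u i j w @ [adj ! u ! i])"
  using nbr_nbr_notin_take assms j unfolding partners_upto_def by (auto simp: take_Suc_conv_app_nth)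

end

lemma length_partners_upto_le:
  assumes valid: "valid_adj adj" and u: "u < length adj" and i: "i < length (adj ! u)"
    and w: "w < length adj"
  shows "length (partners_upto adj u i j w) \<le> length (adj ! w)"
proof -
  note valid = valid_adjD[OF valid]
  let ?v = "adj ! u ! i"
  have "?v \<notin> set (take i (adj ! u))" using nth_notin_set_take[OF valid(1)[OF u] i] .
  then have "distinct (partners_upto adj u i j w)"
    using valid(1)[OF u] unfolding partners_upto_def partners_def by (auto dest: distinct_take)
  moreover have "set (partners_upto adj u i j w) \<subseteq> set (adj ! w)"
  proof
    fix x assume x: "x \<in> set (partners_upto adj u i j w)"
    then have "x \<in> set (adj ! u)" "w \<in> set (adj ! x)"
      unfolding partners_upto_def partners_def using i
      by (auto split: if_splits dest: in_set_takeD)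
    then show "x \<in> set (adj ! w)" using valid(2)[OF u] valid(4)[OF _ w] by blast
  qed
  ultimately have "length (partners_upto adj u i j w) \<le> card (set (adj ! w))"
    using length_le_card_subset by blast
  then show ?thesis using distinct_card[OF valid(1)[OF w]] by simp
qed

lemma length_partners_upto_less:
  assumes "valid_adj adj" "u < length adj" "i < length (adj ! u)" "j < length (adj ! (adj ! u ! i))"
    and w: "w = adj ! (adj ! u ! i) ! j" "w \<noteq> u"
  shows "length (partners_upto adj u i j w) < length (adj ! w)"
proof -
  have "w < length adj" using w valid_adjD(2)[OF assms(1) nbr_less[OF assms(1-3)]] assms(4) by simp
  then have "length (partners_upto adj u i (Suc j) w) \<le> length (adj ! w)"
    using length_partners_upto_le assms(1-3) by blast
  then show ?thesis using partners_upto_Suc[OF assms(1-4) w] by simp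
qed

section \<open>The lister on the word RAM\<close>

definition encode_quads :: "(nat \<times> nat \<times> nat \<times> nat) list \<Rightarrow> int list" where
  "encode_quads qs = concat (map (\<lambda>(a, b, c, d). [int a, int b, int c, int d]) qs)"

lemma encode_quads_simps [simp]:
  "encode_quads [] = []"
  "encode_quads ((a, b, c, d) # qs) = [int a, int b, int c, int d] @ encode_quads qs"
  "encode_quads (qs @ qs') = encode_quads qs @ encode_quads qs'"
  unfolding encode_quads_def by simp_all

lemma lists_all_4cycles_cycle_listing:
  assumes "valid_adj adj"
  shows "lists_all_4cycles adj (encode_quads (cycle_listing adj))"
proof -
  have quads: "quads (encode_quads qs) = map (\<lambda>(a, b, c, d). (int a, int b, int c, int d)) qs" for qs
    by (induction qs) auto
  have len: "length (encode_quads qs) = 4 * length qs" for qs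
    by (induction qs) auto
  have "cyc_edges a b c d \<in> (\<lambda>(a, b, c, d). cyc_edges (nat a) (nat b) (nat c) (nat d)) `
      set (quads (encode_quads (cycle_listing adj)))" if cyc: "is_4cycle (adj_edge adj) a b c d" for a b c d
  proof -
    obtain a' b' c' d' where "(a', b', c', d') \<in> set (cycle_listing adj)" "cyc_edges a b c d = cyc_edges a' b' c' d'"
      using cycle_listing_complete[OF assms cyc] by auto
    then show ?thesis unfolding quads by (force intro: rev_image_eqI)
  qed
  then show ?thesis
    unfolding lists_all_4cycles_def four_cycles_def
    using cycle_listing_sound[OF assms] by (auto simp: len quads)
qed

text \<open>Code at offset \<open>b\<close>, registers \<open>r + 3 .. r + 24\<close>. Registers 3--7 hold the constants
  \<open>0\<close>, \<open>1\<close>, \<open>n\<close>, \<open>table\<close> and \<open>bucket_shift\<close>; 10 and 11 are scratch. The loop heads are at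
  offset 5 (sum up the list lengths to find the end \<open>E\<close> of the input; counter 9, pointer 8),
  18 (write the list addresses into the table), 29 (vertices \<open>u\<close>, register 12), 33 (empty the
  buckets), 48 (neighbours \<open>v\<close> of \<open>u\<close>: cursor 15, end 14, value 16), 58 (neighbours \<open>w\<close> of \<open>v\<close>:
  cursor 19, end 18, value 20) and 70 (report the bucket of \<open>w\<close>: cursor 23, end 24).\<close>

definition lister_code :: "nat \<Rightarrow> nat \<Rightarrow> prog" where
"lister_code b r = [
 LoadConst (r+3) 0,
 LoadConst (r+4) 1,
 Add (r+5) 0 (r+3),
 Add (r+8) (r+5) (r+4),
 LoadConst (r+9) 0,
 Sub (r+10) (r+5) (r+9),
 JumpPos (r+10) (b+8),
 Goto (b+13),
 LoadInd (r+10) (r+8),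
 Add (r+8) (r+8) (r+10),
 Add (r+8) (r+8) (r+4),
 Add (r+9) (r+9) (r+4),
 Goto (b+5),
 LoadConst (r+10) (int (r + 25)),
 Add (r+6) (r+8) (r+10),
 Sub (r+7) (r+6) (r+4),
 Add (r+8) (r+5) (r+4),
 LoadConst (r+9) 0,
 Sub (r+10) (r+5) (r+9),
 JumpPos (r+10) (b+21),
 Goto (b+28),
 Add (r+11) (r+6) (r+9),
 StoreInd (r+11) (r+8),
 LoadInd (r+10) (r+8),
 Add (r+8) (r+8) (r+10),
 Add (r+8) (r+8) (r+4),
 Add (r+9) (r+9) (r+4),
 Goto (b+18),
 LoadConst (r+12) 0,
 Sub (r+10) (r+5) (r+12),
 JumpPos (r+10) (b+32),
 Goto (b+89),
 LoadConst (r+9) 0,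
 Sub (r+10) (r+5) (r+9),
 JumpPos (r+10) (b+36),
 Goto (b+42),
 Add (r+11) (r+6) (r+9),
 LoadInd (r+10) (r+11),
 Add (r+10) (r+10) (r+7),
 StoreInd (r+10) (r+3),
 Add (r+9) (r+9) (r+4),
 Goto (b+33),
 Add (r+11) (r+6) (r+12),
 LoadInd (r+13) (r+11),
 LoadInd (r+10) (r+13),
 Add (r+14) (r+13) (r+10),
 Add (r+14) (r+14) (r+4),
 Add (r+15) (r+13) (r+4),
 Sub (r+10) (r+14) (r+15),
 JumpPos (r+10) (b+51),
 Goto (b+87),
 LoadInd (r+16) (r+15),
 Add (r+11) (r+6) (r+16),
 LoadInd (r+17) (r+11),
 LoadInd (r+10) (r+17),
 Add (r+18) (r+17) (r+10),
 Add (r+18) (r+18) (r+4),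
 Add (r+19) (r+17) (r+4),
 Sub (r+10) (r+18) (r+19),
 JumpPos (r+10) (b+61),
 Goto (b+85),
 LoadInd (r+20) (r+19),
 Sub (r+10) (r+20) (r+12),
 JumpZero (r+10) (b+83),
 Add (r+11) (r+6) (r+20),
 LoadInd (r+21) (r+11),
 Add (r+21) (r+21) (r+7),
 LoadInd (r+22) (r+21),
 Add (r+23) (r+21) (r+4),
 Add (r+24) (r+23) (r+22),
 Sub (r+10) (r+24) (r+23),
 JumpPos (r+10) (b+73),
 Goto (b+80),
 Output (r+12),
 LoadInd (r+10) (r+23),
 Output (r+10),
 Output (r+20),
 Output (r+16),
 Add (r+23) (r+23) (r+4),
 Goto (b+70),
 StoreInd (r+23) (r+16),
 Add (r+22) (r+22) (r+4),
 StoreInd (r+21) (r+22),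
 Add (r+19) (r+19) (r+4),
 Goto (b+58),
 Add (r+15) (r+15) (r+4),
 Goto (b+48),
 Add (r+12) (r+12) (r+4),
 Goto (b+29),
 Halt]"

lemma length_lister_code [simp]: "length (lister_code b r) = 90"
  by (simp add: lister_code_def)

locale bounded_run =
  fixes P :: prog and B :: int
begin

definition bounded :: "(nat \<Rightarrow> int) \<Rightarrow> bool" where
  "bounded m \<longleftrightarrow> (\<forall>a. \<bar>m a\<bar> \<le> B)"

definition runs :: "conf \<Rightarrow> nat \<Rightarrow> conf \<Rightarrow> bool" where
  "runs c k c' \<longleftrightarrow> bounded (mem c) \<longrightarrow>
     (step P ^^ k) c = c' \<and> (\<forall>j\<le>k. bounded (mem ((step P ^^ j) c)))"

definition reaches :: "conf \<Rightarrow> nat \<Rightarrow> conf \<Rightarrow> bool" where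
  "reaches c K c' \<longleftrightarrow> (\<exists>k. runs c k c' \<and> k \<le> K)"

text \<open>Loads and stores only copy stored values, so constants and arithmetic are the only
  instructions that can leave the bound.\<close>

fun fits :: "instr \<Rightarrow> conf \<Rightarrow> bool" where
  "fits (LoadConst i k) c = (\<bar>k\<bar> \<le> B)"
| "fits (Add i j k) c = (\<bar>mem c j + mem c k\<bar> \<le> B)"
| "fits (Sub i j k) c = (\<bar>mem c j - mem c k\<bar> \<le> B)"
| "fits _ c = True"

lemma bounded_exec: "bounded (mem c) \<Longrightarrow> fits ins c \<Longrightarrow> bounded (mem (exec ins c))"
  by (cases ins) (auto simp: bounded_def)

lemma runs_0: "runs c 0 c"
  unfolding runs_def by simp

lemma runs_step:
  assumes "pc c < length P" "P ! pc c \<noteq> Halt" "fits (P ! pc c) c" "runs (exec (P ! pc c) c) k c'"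
  shows "runs c (Suc k) c'"
  unfolding runs_def
proof (intro impI conjI allI)
  assume c: "bounded (mem c)"
  have "step P c = exec (P ! pc c) c"
    using assms(1,2) unfolding step_def halted_def by auto
  then have shift: "(step P ^^ Suc j) c = (step P ^^ j) (exec (P ! pc c) c)" for j
    by (simp add: funpow_Suc_right del: funpow.simps)
  have "bounded (mem (exec (P ! pc c) c))" using bounded_exec[OF c assms(3)] .
  then have run: "(step P ^^ k) (exec (P ! pc c) c) = c'"
    and run_bounded: "\<forall>j\<le>k. bounded (mem ((step P ^^ j) (exec (P ! pc c) c)))"
    using assms(4) unfolding runs_def by auto
  show "(step P ^^ Suc k) c = c'" using run shift by simp
  fix j assume "j \<le> Suc k"
  then show "bounded (mem ((step P ^^ j) c))"
    using c run_bounded shift by (cases j) auto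
qed

lemma runs_trans:
  assumes "runs c k c'" "runs c' k' c''"
  shows "runs c (k + k') c''"
  unfolding runs_def
proof (intro impI conjI allI)
  assume "bounded (mem c)"
  then have run: "(step P ^^ k) c = c'" and run_bounded: "\<forall>j\<le>k. bounded (mem ((step P ^^ j) c))"
    using assms(1) unfolding runs_def by auto
  then have "bounded (mem c')" by auto
  then have run': "(step P ^^ k') c' = c''" and run_bounded': "\<forall>j\<le>k'. bounded (mem ((step P ^^ j) c'))"
    using assms(2) unfolding runs_def by auto
  have shift: "(step P ^^ (j + k)) c = (step P ^^ j) c'" for j
    using run by (simp add: funpow_add)
  show "(step P ^^ (k + k')) c = c''" using shift[of k'] run' by (simp add: add.commute)
  fix j assume "j \<le> k + k'"
  then show "bounded (mem ((step P ^^ j) c))"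
    using run_bounded run_bounded' shift[of "j - k"] by (cases "j \<le> k") auto
qed

lemma reaches_refl: "reaches c K c"
  unfolding reaches_def using runs_0 by blast

lemma reaches_trans: "reaches c K c' \<Longrightarrow> reaches c' K' c'' \<Longrightarrow> reaches c (K + K') c''"
  unfolding reaches_def using runs_trans add_mono by blast

lemma reaches_mono: "reaches c K c' \<Longrightarrow> K \<le> K' \<Longrightarrow> reaches c K' c'"
  unfolding reaches_def using order_trans by blast

lemma reaches_loop:
  assumes body: "\<And>i m out. i < N \<Longrightarrow> I i m out \<Longrightarrow> \<exists>m' out1.
      reaches \<lparr>pc = p, mem = m, outp = out\<rparr> (cost i) \<lparr>pc = p, mem = m', outp = out1\<rparr> \<and> I (Suc i) m' out1"
    and start: "I 0 m out"
  shows "\<exists>m' out1. reaches \<lparr>pc = p, mem = m, outp = out\<rparr> (\<Sum>i<N. cost i) \<lparr>pc = p, mem = m', outp = out1\<rparr>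
    \<and> I N m' out1"
proof -
  have "\<exists>m' out1. reaches \<lparr>pc = p, mem = m, outp = out\<rparr> (\<Sum>i<M. cost i) \<lparr>pc = p, mem = m', outp = out1\<rparr>
    \<and> I M m' out1" if "M \<le> N" for M
    using that
  proof (induction M)
    case 0
    then show ?case using start reaches_refl by auto
  next
    case (Suc M)
    then obtain m' out1 where "reaches \<lparr>pc = p, mem = m, outp = out\<rparr> (\<Sum>i<M. cost i) \<lparr>pc = p, mem = m', outp = out1\<rparr>"
      "I M m' out1" by auto
    moreover obtain m'' out2 where
      "reaches \<lparr>pc = p, mem = m', outp = out1\<rparr> (cost M) \<lparr>pc = p, mem = m'', outp = out2\<rparr>" "I (Suc M) m'' out2"
      using body[of M m' out1] Suc.prems calculation(2) by auto
    ultimately show ?case using reaches_trans by fastforce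
  qed
  then show ?thesis by simp
qed

lemma halted_step: "halted P c \<Longrightarrow> (step P ^^ j) c = c"
  by (induction j) (auto simp: step_def)

lemma reaches_halted:
  assumes "reaches c K c'" "bounded (mem c)" "halted P c'"
  shows "\<exists>k\<le>K. (step P ^^ k) c = c' \<and> (\<forall>j. bounded (mem ((step P ^^ j) c)))"
proof -
  obtain k where k: "k \<le> K" "(step P ^^ k) c = c'" and bnd: "\<forall>j\<le>k. bounded (mem ((step P ^^ j) c))"
    using assms(1,2) unfolding reaches_def runs_def by auto
  have "bounded (mem ((step P ^^ j) c))" for j
  proof (cases "j \<le> k")
    case False
    then have "(step P ^^ j) c = (step P ^^ (j - k)) ((step P ^^ k) c)"
      by (metis funpow_add le_add_diff_inverse2 nat_le_linear o_apply)
    then show ?thesis using bnd k(2) halted_step[OF assms(3)] by auto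
  qed (use bnd in auto)
  then show ?thesis using k by blast
qed

end

locale loaded_lister = bounded_run P B for P :: prog and B :: int +
  fixes adj :: "nat list list" and b r :: nat
  assumes valid: "valid_adj adj"
    and code_len: "b + 90 \<le> length P"
    and code: "\<And>i. i < 90 \<Longrightarrow> P ! (b + i) = lister_code b r ! i"
    and regs_apart: "r + 25 \<le> length adj + 1 \<or> list_addr adj (length adj) \<le> r"
    and B_large: "4 * int (list_addr adj (length adj) + r + 30) \<le> B"
begin

abbreviation "n \<equiv> length adj"
abbreviation "deg v \<equiv> length (adj ! v)"
abbreviation "addr \<equiv> list_addr adj"
abbreviation "E \<equiv> list_addr adj (length adj)"

text \<open>The input occupies the cells below \<open>E\<close>. The registers lie either among the list addresses
  \<open>1 .. n\<close> of the input, which the lister never reads, or above \<open>E\<close>. The lister writes a table of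
  list addresses from \<open>table\<close> on, and the bucket of \<open>w\<close> (its length, then its entries) has the
  layout of the adjacency list of \<open>w\<close>, shifted by \<open>bucket_shift\<close> to lie above the table.\<close>

definition table :: nat where "table = E + r + 25"
definition bucket_shift :: nat where "bucket_shift = E + r + 24"
abbreviation "bucket w \<equiv> addr w + bucket_shift"
definition value_cap :: nat where "value_cap = E + bucket_shift + n"

definition data_cell :: "nat \<Rightarrow> bool" where
  "data_cell a \<longleftrightarrow> a < r \<or> r + 25 \<le> a"

definition same_data :: "(nat \<Rightarrow> int) \<Rightarrow> (nat \<Rightarrow> int) \<Rightarrow> bool" where
  "same_data m m' \<longleftrightarrow> (\<forall>a. data_cell a \<longrightarrow> m' a = m a)"

definition input_intact :: "(nat \<Rightarrow> int) \<Rightarrow> bool" where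
  "input_intact m \<longleftrightarrow>
     (\<forall>v<n. m (addr v) = int (deg v) \<and> (\<forall>j<deg v. m (addr v + 1 + j) = int (adj ! v ! j)))"

definition addr_table :: "(nat \<Rightarrow> int) \<Rightarrow> bool" where
  "addr_table m \<longleftrightarrow> (\<forall>v<n. m (table + v) = int (addr v))"

definition buckets :: "(nat \<Rightarrow> int) \<Rightarrow> (nat \<Rightarrow> nat list) \<Rightarrow> bool" where
  "buckets m Ls \<longleftrightarrow> (\<forall>w<n. length (Ls w) \<le> deg w \<and> m (bucket w) = int (length (Ls w)) \<and>
     (\<forall>k<length (Ls w). m (bucket w + 1 + k) = int (Ls w ! k)))"

definition main_inv :: "(nat \<Rightarrow> int) \<Rightarrow> bool" where
  "main_inv m \<longleftrightarrow> m (r+3) = 0 \<and> m (r+4) = 1 \<and> m (r+5) = int n \<and> m (r+6) = int table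
     \<and> m (r+7) = int bucket_shift \<and> input_intact m \<and> addr_table m"

lemma data_cell_ne_reg [simp]:
  "data_cell a \<Longrightarrow> i < 25 \<Longrightarrow> a = r + i \<longleftrightarrow> False"
  "data_cell a \<Longrightarrow> i < 25 \<Longrightarrow> r + i = a \<longleftrightarrow> False"
  unfolding data_cell_def by auto

lemma list_cell_lt_E: "v < n \<Longrightarrow> j \<le> deg v \<Longrightarrow> addr v + j < E"
  using list_end_less_list_addr[of v n adj] by simp

lemma data_cell_list: "v < n \<Longrightarrow> j \<le> deg v \<Longrightarrow> data_cell (addr v + j)"
  unfolding data_cell_def using regs_apart list_cell_lt_E[of v j] list_addr_ge[of adj v] by auto

lemma data_cell_high: "table \<le> a \<Longrightarrow> data_cell a"
  unfolding data_cell_def table_def by auto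

lemma table_eq: "table = bucket_shift + 1"
  unfolding table_def bucket_shift_def by simp

lemma data_cell_table: "data_cell (table + v)"
  by (simp add: data_cell_high)

lemma bucket_cell_ge: "w < n \<Longrightarrow> table + n \<le> bucket w + k"
  using list_addr_ge[of adj w] table_eq by simp

lemma data_cell_bucket: "w < n \<Longrightarrow> data_cell (bucket w + k)"
  using bucket_cell_ge[of w k] data_cell_high[of "bucket w + k"] by simp

lemma same_data_refl [simp]: "same_data m m"
  unfolding same_data_def by simp

lemma same_data_trans: "same_data m1 m2 \<Longrightarrow> same_data m2 m3 \<Longrightarrow> same_data m1 m3"
  unfolding same_data_def by auto

lemma same_data_upd_reg [simp]: "i < 25 \<Longrightarrow> same_data m (m'(r + i := x)) \<longleftrightarrow> same_data m m'"
  unfolding same_data_def by auto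

lemma same_data_upd: "same_data m m' \<Longrightarrow> same_data (m(a := x)) (m'(a := x))"
  unfolding same_data_def by simp

lemma input_intact_same_data: "same_data m m' \<Longrightarrow> input_intact m \<Longrightarrow> input_intact m'"
  unfolding input_intact_def same_data_def
  using data_cell_list[of _ 0] data_cell_list[of _ "Suc _"] by (simp add: add.assoc)

lemma addr_table_same_data: "same_data m m' \<Longrightarrow> addr_table m \<Longrightarrow> addr_table m'"
  unfolding addr_table_def same_data_def using data_cell_table by simp

lemma buckets_same_data:
  assumes "same_data m m'" "buckets m Ls"
  shows "buckets m' Ls"
  unfolding buckets_def
proof (intro allI impI)
  fix w assume w: "w < n"
  have "m' (bucket w + k) = m (bucket w + k)" for k
    using assms(1) data_cell_bucket[OF w] unfolding same_data_def by blast
  from this[of 0] this[of "Suc _"] show "length (Ls w) \<le> deg w \<and> m' (bucket w) = int (length (Ls w)) \<and>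
      (\<forall>k<length (Ls w). m' (bucket w + 1 + k) = int (Ls w ! k))"
    using assms(2) w unfolding buckets_def by simp
qed

lemma input_intact_upd:
  assumes "a < addr 0 \<or> E \<le> a"
  shows "input_intact (m(a := x)) \<longleftrightarrow> input_intact m"
proof -
  have "addr v + j \<noteq> a" if "v < n" "j \<le> deg v" for v j
    using assms list_cell_lt_E[OF that] list_addr_mono[of 0 v adj] by auto
  from this[of _ 0] this[of _ "Suc _"] show ?thesis
    unfolding input_intact_def by (auto simp: add.assoc)
qed

lemma addr_table_upd: "table + n \<le> a \<Longrightarrow> addr_table (m(a := x)) \<longleftrightarrow> addr_table m"
  unfolding addr_table_def by auto

lemma main_inv_upd_high:
  "table + n \<le> a \<Longrightarrow> main_inv (m(a := x)) \<longleftrightarrow> main_inv m"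
  unfolding main_inv_def using input_intact_upd[of a] addr_table_upd[of a]
  by (auto simp: table_def bucket_shift_def)

lemma main_inv_same_data:
  assumes "same_data m m'" "main_inv m"
    and "\<forall>i\<in>{3, 4, 5, 6, 7}. m' (r + i) = m (r + i)"
  shows "main_inv m'"
  using assms input_intact_same_data addr_table_same_data unfolding main_inv_def by auto

lemma bucket_inj: "w < n \<Longrightarrow> w' < n \<Longrightarrow> bucket w = bucket w' \<Longrightarrow> w = w'"
  using list_cell_inj[of w adj w' 0 0] by simp

lemma buckets_append:
  assumes "buckets m Ls" and w: "w < n" and room: "length (Ls w) < deg w"
  shows "buckets (m(bucket w + 1 + length (Ls w) := int x, bucket w := int (length (Ls w) + 1)))
    (Ls(w := Ls w @ [x]))"
  unfolding buckets_def
proof (intro allI impI conjI)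
  let ?c = "length (Ls w)"
  let ?m = "m(bucket w + 1 + ?c := int x, bucket w := int (?c + 1))"
  fix w' assume w': "w' < n"
  have old: "length (Ls w') \<le> deg w'" "m (bucket w') = int (length (Ls w'))"
    "\<And>k. k < length (Ls w') \<Longrightarrow> m (bucket w' + 1 + k) = int (Ls w' ! k)"
    using assms(1) w' unfolding buckets_def by auto
  have apart: "bucket w' + j' \<noteq> bucket w + j" if "w' \<noteq> w" "j' \<le> deg w'" "j \<le> deg w" for j j'
    using list_cell_inj[OF w' w that(2,3)] that(1) by auto
  show "length ((Ls(w := Ls w @ [x])) w') \<le> deg w'" using old(1) room by auto
  show "?m (bucket w') = int (length ((Ls(w := Ls w @ [x])) w'))"
    using old(2) apart[of 0 0] apart[of 0 "Suc ?c"] room by (cases "w' = w") auto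
  fix k assume k: "k < length ((Ls(w := Ls w @ [x])) w')"
  show "?m (bucket w' + 1 + k) = int ((Ls(w := Ls w @ [x])) w' ! k)"
  proof (cases "w' = w")
    case True
    then show ?thesis using k old(3) by (cases "k = ?c") (auto simp: nth_append)
  next
    case False
    then show ?thesis
      using k old(1,3) room apart[of "Suc k" 0] apart[of "Suc k" "Suc ?c"] by auto
  qed
qed

lemma n_le_cap: "n \<le> value_cap"
  unfolding value_cap_def by simp

lemma list_cell_le_cap: "v < n \<Longrightarrow> j \<le> deg v \<Longrightarrow> addr v + j \<le> value_cap"
  using list_cell_lt_E[of v j] unfolding value_cap_def by simp

lemma table_le_cap: "v < n \<Longrightarrow> table + v \<le> value_cap"
  using table_eq list_addr_ge[of adj n] unfolding value_cap_def by simp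

lemma bucket_le_cap: "w < n \<Longrightarrow> k \<le> deg w \<Longrightarrow> bucket w + k \<le> value_cap"
  using list_cell_lt_E[of w k] unfolding value_cap_def by simp

lemma cap_below_B: "int value_cap + 10 \<le> B"
  using B_large list_addr_ge[of adj n] unfolding value_cap_def bucket_shift_def by simp

text \<open>\<open>simp\<close> normalises \<open>b + 1\<close> and \<open>b + 2\<close> to \<open>Suc b\<close> and \<open>Suc (Suc b)\<close>; the rules below keep
  every program counter in the form \<open>b + numeral\<close>.\<close>

lemma Suc_add_numeral: "Suc (b + numeral k) = b + numeral (k + Num.One)"
  by simp

lemma code_start:
  "P ! b = lister_code b r ! 0" "P ! Suc b = lister_code b r ! 1" "P ! Suc (Suc b) = lister_code b r ! 2"
  using code[of 0] code[of 1] code[of 2] by simp_all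

lemma Suc_Suc_Suc_eq: "Suc (Suc (Suc b)) = b + 3"
  by simp

lemmas exec_simps = code code_start Suc_Suc_Suc_eq Suc_add_numeral lister_code_def abs_le_iff nat_int_add

lemmas exec_facts = code_len B_large list_addr_ge[of adj n] cap_below_B n_le_cap

text \<open>The first step is
  forced because loop bodies start and end at the same program counter.\<close>

lemma start_to_end_scan:
  assumes "m 0 = int n"
  shows "\<exists>m'. reaches \<lparr>pc = b, mem = m, outp = out\<rparr> 5 \<lparr>pc = b + 5, mem = m', outp = out\<rparr>
    \<and> same_data m m' \<and> m' (r+3) = 0 \<and> m' (r+4) = 1 \<and> m' (r+5) = int n
    \<and> m' (r+9) = 0 \<and> m' (r+8) = int (addr 0)"
  using assms exec_facts list_addr_0 unfolding reaches_def
  by - (intro exI conjI, (rule runs_step; simp add: exec_simps),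
    (rule runs_0 | (rule runs_step; simp add: exec_simps))+, simp_all)

lemma end_scan_iter:
  assumes "i < n" "m (r+3) = 0" "m (r+4) = 1" "m (r+5) = int n" "m (r+9) = int i"
    "m (r+8) = int (addr i)" "m (addr i) = int (deg i)"
  shows "\<exists>m'. reaches \<lparr>pc = b + 5, mem = m, outp = out\<rparr> 7 \<lparr>pc = b + 5, mem = m', outp = out\<rparr>
    \<and> same_data m m' \<and> m' (r+3) = 0 \<and> m' (r+4) = 1 \<and> m' (r+5) = int n
    \<and> m' (r+9) = int (Suc i) \<and> m' (r+8) = int (addr (Suc i))"
  using assms exec_facts data_cell_list[of i 0] list_cell_lt_E[of i "deg i"] list_addr_Suc[of i adj]
  unfolding reaches_def
  by - (intro exI conjI, (rule runs_step; simp add: exec_simps),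
    (rule runs_0 | (rule runs_step; simp add: exec_simps))+, simp_all)

lemma end_scan_to_table:
  assumes "m (r+3) = 0" "m (r+4) = 1" "m (r+5) = int n" "m (r+9) = int n" "m (r+8) = int E"
  shows "\<exists>m'. reaches \<lparr>pc = b + 5, mem = m, outp = out\<rparr> 8 \<lparr>pc = b + 18, mem = m', outp = out\<rparr>
    \<and> same_data m m' \<and> m' (r+3) = 0 \<and> m' (r+4) = 1 \<and> m' (r+5) = int n
    \<and> m' (r+6) = int table \<and> m' (r+7) = int bucket_shift \<and> m' (r+9) = 0 \<and> m' (r+8) = int (addr 0)"
  using assms exec_facts list_addr_0 unfolding reaches_def table_def bucket_shift_def
  by - (intro exI conjI, (rule runs_step; simp add: exec_simps),
    (rule runs_0 | (rule runs_step; simp add: exec_simps))+, simp_all)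

lemma table_iter:
  assumes "i < n" "m (r+3) = 0" "m (r+4) = 1" "m (r+5) = int n" "m (r+6) = int table"
    "m (r+7) = int bucket_shift" "m (r+9) = int i" "m (r+8) = int (addr i)" "m (addr i) = int (deg i)"
  shows "\<exists>m'. reaches \<lparr>pc = b + 18, mem = m, outp = out\<rparr> 9 \<lparr>pc = b + 18, mem = m', outp = out\<rparr>
    \<and> same_data (m(table + i := int (addr i))) m' \<and> m' (r+3) = 0 \<and> m' (r+4) = 1 \<and> m' (r+5) = int n
    \<and> m' (r+6) = int table \<and> m' (r+7) = int bucket_shift
    \<and> m' (r+9) = int (Suc i) \<and> m' (r+8) = int (addr (Suc i))"
proof -
  have "addr i \<noteq> table + i" "int table + int n \<le> B"
    using list_cell_lt_E[of i 0] assms(1) B_large list_addr_ge[of adj n] unfolding table_def by auto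
  then show ?thesis
    using assms exec_facts data_cell_list[of i 0] data_cell_table[of i] list_cell_lt_E[of i "deg i"]
      list_addr_Suc[of i adj]
    unfolding reaches_def same_data_def
    by - (intro exI conjI, (rule runs_step; simp add: exec_simps),
      (rule runs_0 | (rule runs_step; simp add: exec_simps))+, simp_all)
qed

lemma table_to_vertex:
  assumes "m (r+3) = 0" "m (r+4) = 1" "m (r+5) = int n" "m (r+9) = int n"
  shows "\<exists>m'. reaches \<lparr>pc = b + 18, mem = m, outp = out\<rparr> 4 \<lparr>pc = b + 29, mem = m', outp = out\<rparr>
    \<and> same_data m m' \<and> (\<forall>j<25. j \<notin> {10, 12} \<longrightarrow> m' (r + j) = m (r + j)) \<and> m' (r+12) = 0"
  using assms exec_facts list_addr_ge[of adj n] unfolding reaches_def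
  by - (intro exI conjI, (rule runs_step; simp add: exec_simps),
    (rule runs_0 | (rule runs_step; simp add: exec_simps))+, simp_all)

lemma vertex_to_reset:
  assumes "m (r+5) = int n" "m (r+12) = int u" "u < n"
  shows "\<exists>m'. reaches \<lparr>pc = b + 29, mem = m, outp = out\<rparr> 3 \<lparr>pc = b + 33, mem = m', outp = out\<rparr>
    \<and> same_data m m' \<and> m' (r+9) = 0 \<and> (\<forall>j<25. j \<notin> {9, 10} \<longrightarrow> m' (r + j) = m (r + j))"
  using assms exec_facts unfolding reaches_def
  by - (intro exI conjI, (rule runs_step; simp add: exec_simps),
    (rule runs_0 | (rule runs_step; simp add: exec_simps))+, simp_all)

lemma vertex_to_halt:
  assumes "m (r+5) = int n" "m (r+12) = int n"
  shows "\<exists>m'. reaches \<lparr>pc = b + 29, mem = m, outp = out\<rparr> 3 \<lparr>pc = b + 89, mem = m', outp = out\<rparr>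
    \<and> same_data m m'"
  using assms exec_facts unfolding reaches_def
  by - (intro exI conjI, (rule runs_step; simp add: exec_simps),
    (rule runs_0 | (rule runs_step; simp add: exec_simps))+, simp_all)

lemma reset_iter:
  assumes "m (r+3) = 0" "m (r+4) = 1" "m (r+5) = int n" "m (r+6) = int table"
    "m (r+7) = int bucket_shift" "m (r+9) = int i" "i < n" "m (table + i) = int (addr i)"
  shows "\<exists>m'. reaches \<lparr>pc = b + 33, mem = m, outp = out\<rparr> 8 \<lparr>pc = b + 33, mem = m', outp = out\<rparr>
    \<and> same_data (m(bucket i := 0)) m' \<and> m' (r+9) = int (Suc i)
    \<and> (\<forall>j<25. j \<notin> {9, 10, 11} \<longrightarrow> m' (r + j) = m (r + j))"
  using assms exec_facts data_cell_table[of i] data_cell_bucket[of i 0] table_le_cap[of i]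
    bucket_le_cap[of i 0]
  unfolding reaches_def same_data_def
  by - (intro exI conjI, (rule runs_step; simp add: exec_simps),
    (rule runs_0 | (rule runs_step; simp add: exec_simps))+, simp_all)

lemma reset_to_neighbour:
  assumes "m (r+4) = 1" "m (r+5) = int n" "m (r+6) = int table" "m (r+9) = int n" "m (r+12) = int u"
    "u < n" "m (table + u) = int (addr u)" "m (addr u) = int (deg u)"
  shows "\<exists>m'. reaches \<lparr>pc = b + 33, mem = m, outp = out\<rparr> 9 \<lparr>pc = b + 48, mem = m', outp = out\<rparr>
    \<and> same_data m m' \<and> m' (r+13) = int (addr u) \<and> m' (r+14) = int (addr u + deg u + 1)
    \<and> m' (r+15) = int (addr u + 1) \<and> (\<forall>j<25. j \<notin> {10, 11, 13, 14, 15} \<longrightarrow> m' (r + j) = m (r + j))"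
  using assms exec_facts data_cell_table[of u] data_cell_list[of u 0] table_le_cap[of u]
    list_cell_le_cap[of u "deg u"]
  unfolding reaches_def
  by - (intro exI conjI, (rule runs_step; simp add: exec_simps),
    (rule runs_0 | (rule runs_step; simp add: exec_simps))+, simp_all)

lemma neighbour_to_wedge:
  assumes "m (r+4) = 1" "m (r+6) = int table" "m (r+14) = int e" "m (r+15) = int q" "q < e"
    "data_cell q" "m q = int v" "v < n" "m (table + v) = int (addr v)" "m (addr v) = int (deg v)"
    "e \<le> value_cap"
  shows "\<exists>m'. reaches \<lparr>pc = b + 48, mem = m, outp = out\<rparr> 10 \<lparr>pc = b + 58, mem = m', outp = out\<rparr>
    \<and> same_data m m' \<and> m' (r+16) = int v \<and> m' (r+17) = int (addr v)
    \<and> m' (r+18) = int (addr v + deg v + 1) \<and> m' (r+19) = int (addr v + 1)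
    \<and> (\<forall>j<25. j \<notin> {10, 11, 16, 17, 18, 19} \<longrightarrow> m' (r + j) = m (r + j))"
  using assms exec_facts data_cell_table[of v] data_cell_list[of v 0] table_le_cap[of v]
    list_cell_le_cap[of v "deg v"]
  unfolding reaches_def
  by - (intro exI conjI, (rule runs_step; simp add: exec_simps),
    (rule runs_0 | (rule runs_step; simp add: exec_simps))+, simp_all)

lemma neighbour_to_vertex:
  assumes "m (r+4) = 1" "m (r+12) = int u" "m (r+14) = int e" "m (r+15) = int e"
    "u \<le> value_cap" "e \<le> value_cap"
  shows "\<exists>m'. reaches \<lparr>pc = b + 48, mem = m, outp = out\<rparr> 5 \<lparr>pc = b + 29, mem = m', outp = out\<rparr>
    \<and> same_data m m' \<and> m' (r+12) = int (Suc u) \<and> (\<forall>j<25. j \<notin> {10, 12} \<longrightarrow> m' (r + j) = m (r + j))"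
  using assms exec_facts unfolding reaches_def
  by - (intro exI conjI, (rule runs_step; simp add: exec_simps),
    (rule runs_0 | (rule runs_step; simp add: exec_simps))+, simp_all)

lemma wedge_back:
  assumes "m (r+4) = 1" "m (r+12) = int u" "m (r+18) = int e" "m (r+19) = int q" "q < e"
    "data_cell q" "m q = int u" "e \<le> value_cap"
  shows "\<exists>m'. reaches \<lparr>pc = b + 58, mem = m, outp = out\<rparr> 7 \<lparr>pc = b + 58, mem = m', outp = out\<rparr>
    \<and> same_data m m' \<and> m' (r+19) = int (Suc q)
    \<and> (\<forall>j<25. j \<notin> {10, 19, 20} \<longrightarrow> m' (r + j) = m (r + j))"
  using assms exec_facts unfolding reaches_def
  by - (intro exI conjI, (rule runs_step; simp add: exec_simps),
    (rule runs_0 | (rule runs_step; simp add: exec_simps))+, simp_all)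

lemma wedge_to_report:
  assumes "m (r+4) = 1" "m (r+6) = int table" "m (r+7) = int bucket_shift" "m (r+12) = int u"
    "m (r+18) = int e" "m (r+19) = int q" "q < e" "data_cell q" "m q = int w" "w \<noteq> u" "w < n" "u < n"
    "e \<le> value_cap" "m (table + w) = int (addr w)" "m (bucket w) = int c" "c \<le> deg w"
  shows "\<exists>m'. reaches \<lparr>pc = b + 58, mem = m, outp = out\<rparr> 12 \<lparr>pc = b + 70, mem = m', outp = out\<rparr>
    \<and> same_data m m' \<and> m' (r+20) = int w \<and> m' (r+21) = int (bucket w) \<and> m' (r+22) = int c
    \<and> m' (r+23) = int (bucket w + 1) \<and> m' (r+24) = int (bucket w + 1 + c)
    \<and> (\<forall>j<25. j \<notin> {10, 11, 20, 21, 22, 23, 24} \<longrightarrow> m' (r + j) = m (r + j))"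
proof -
  have "bucket w + 1 + c \<le> value_cap" "bucket w \<le> value_cap"
    using bucket_le_cap[of w "1 + c"] bucket_le_cap[of w 0] assms(11,16) list_cell_lt_E[of w "deg w"]
    unfolding value_cap_def by auto
  then show ?thesis
    using assms exec_facts data_cell_table[of w] data_cell_bucket[of w 0] table_le_cap[of w]
    unfolding reaches_def
    by - (intro exI conjI, (rule runs_step; simp add: exec_simps),
      (rule runs_0 | (rule runs_step; simp add: exec_simps))+, simp_all)
qed

lemma wedge_to_neighbour:
  assumes "m (r+4) = 1" "m (r+15) = int q" "m (r+18) = int e" "m (r+19) = int e"
    "q \<le> value_cap" "e \<le> value_cap"
  shows "\<exists>m'. reaches \<lparr>pc = b + 58, mem = m, outp = out\<rparr> 5 \<lparr>pc = b + 48, mem = m', outp = out\<rparr>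
    \<and> same_data m m' \<and> m' (r+15) = int (Suc q) \<and> (\<forall>j<25. j \<notin> {10, 15} \<longrightarrow> m' (r + j) = m (r + j))"
  using assms exec_facts unfolding reaches_def
  by - (intro exI conjI, (rule runs_step; simp add: exec_simps),
    (rule runs_0 | (rule runs_step; simp add: exec_simps))+, simp_all)

lemma report_iter:
  assumes "m (r+4) = 1" "m (r+12) = int u" "m (r+16) = int v" "m (r+20) = int w" "m (r+23) = int q"
    "m (r+24) = int e" "q < e" "data_cell q" "m q = int x" "e \<le> value_cap"
  shows "\<exists>m'. reaches \<lparr>pc = b + 70, mem = m, outp = out\<rparr> 9
      \<lparr>pc = b + 70, mem = m', outp = out @ [int u, int x, int w, int v]\<rparr>
    \<and> same_data m m' \<and> m' (r+23) = int (Suc q) \<and> (\<forall>j<25. j \<notin> {10, 23} \<longrightarrow> m' (r + j) = m (r + j))"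
  using assms exec_facts unfolding reaches_def
  by - (intro exI conjI, (rule runs_step; simp add: exec_simps),
    (rule runs_0 | (rule runs_step; simp add: exec_simps))+, simp_all)

lemma report_to_wedge:
  assumes "m (r+4) = 1" "m (r+16) = int v" "m (r+19) = int q" "m (r+21) = int s" "m (r+22) = int c"
    "m (r+23) = int e" "m (r+24) = int e" "c \<le> value_cap" "q \<le> value_cap" "e \<le> value_cap"
    "data_cell e" "data_cell s"
  shows "\<exists>m'. reaches \<lparr>pc = b + 70, mem = m, outp = out\<rparr> 8 \<lparr>pc = b + 58, mem = m', outp = out\<rparr>
    \<and> same_data (m(e := int v, s := int (Suc c))) m' \<and> m' (r+19) = int (Suc q) \<and> m' (r+22) = int (Suc c)
    \<and> (\<forall>j<25. j \<notin> {10, 19, 22} \<longrightarrow> m' (r + j) = m (r + j))"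
  using assms exec_facts unfolding reaches_def same_data_def
  by - (intro exI conjI, (rule runs_step; simp add: exec_simps),
    (rule runs_0 | (rule runs_step; simp add: exec_simps))+, simp_all)

lemma end_scan_loop:
  assumes "input_intact m" "m (r+3) = 0" "m (r+4) = 1" "m (r+5) = int n" "m (r+9) = 0"
    "m (r+8) = int (addr 0)"
  shows "\<exists>m'. reaches \<lparr>pc = b + 5, mem = m, outp = out\<rparr> (7 * n) \<lparr>pc = b + 5, mem = m', outp = out\<rparr>
    \<and> same_data m m' \<and> m' (r+3) = 0 \<and> m' (r+4) = 1 \<and> m' (r+5) = int n \<and> m' (r+9) = int n
    \<and> m' (r+8) = int E"
proof -
  define I where "I i m' out' \<longleftrightarrow> out' = out \<and> same_data m m' \<and> m' (r+3) = 0 \<and> m' (r+4) = 1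
    \<and> m' (r+5) = int n \<and> m' (r+9) = int i \<and> m' (r+8) = int (addr i)" for i m' out'
  have "\<exists>m' out'. reaches \<lparr>pc = b + 5, mem = m, outp = out\<rparr> (\<Sum>i<n. 7) \<lparr>pc = b + 5, mem = m', outp = out'\<rparr>
    \<and> I n m' out'"
  proof (rule reaches_loop)
    fix i m' out' assume i: "i < n" and inv: "I i m' out'"
    then have "m' (addr i) = int (deg i)"
      using input_intact_same_data assms(1) unfolding I_def input_intact_def by blast
    then show "\<exists>m'' out''. reaches \<lparr>pc = b + 5, mem = m', outp = out'\<rparr> 7 \<lparr>pc = b + 5, mem = m'', outp = out''\<rparr>
      \<and> I (Suc i) m'' out''"
      using end_scan_iter[of i m' out'] i inv same_data_trans unfolding I_def by blast
  qed (use assms in \<open>simp add: I_def\<close>)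
  then show ?thesis unfolding I_def by (auto simp: mult.commute)
qed

lemma table_loop:
  assumes "input_intact m" "m (r+3) = 0" "m (r+4) = 1" "m (r+5) = int n" "m (r+6) = int table"
    "m (r+7) = int bucket_shift" "m (r+9) = 0" "m (r+8) = int (addr 0)"
  shows "\<exists>m'. reaches \<lparr>pc = b + 18, mem = m, outp = out\<rparr> (9 * n) \<lparr>pc = b + 18, mem = m', outp = out\<rparr>
    \<and> input_intact m' \<and> addr_table m' \<and> m' (r+3) = 0 \<and> m' (r+4) = 1 \<and> m' (r+5) = int n
    \<and> m' (r+6) = int table \<and> m' (r+7) = int bucket_shift \<and> m' (r+9) = int n"
proof -
  define I where "I i m' out' \<longleftrightarrow> out' = out \<and> input_intact m' \<and> m' (r+3) = 0 \<and> m' (r+4) = 1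
    \<and> m' (r+5) = int n \<and> m' (r+6) = int table \<and> m' (r+7) = int bucket_shift
    \<and> m' (r+9) = int i \<and> m' (r+8) = int (addr i) \<and> (\<forall>v<i. m' (table + v) = int (addr v))" for i m' out'
  have "\<exists>m' out'. reaches \<lparr>pc = b + 18, mem = m, outp = out\<rparr> (\<Sum>i<n. 9) \<lparr>pc = b + 18, mem = m', outp = out'\<rparr>
    \<and> I n m' out'"
  proof (rule reaches_loop)
    fix i m' out' assume i: "i < n" and inv: "I i m' out'"
    then obtain m'' where m'': "reaches \<lparr>pc = b + 18, mem = m', outp = out'\<rparr> 9 \<lparr>pc = b + 18, mem = m'', outp = out'\<rparr>"
      "same_data (m'(table + i := int (addr i))) m''" "m'' (r+3) = 0" "m'' (r+4) = 1" "m'' (r+5) = int n"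
      "m'' (r+6) = int table" "m'' (r+7) = int bucket_shift" "m'' (r+9) = int (Suc i)"
      "m'' (r+8) = int (addr (Suc i))"
      using table_iter[of i m' out'] unfolding I_def input_intact_def by auto
    moreover have "input_intact m''"
      using inv m''(2) input_intact_same_data input_intact_upd[of "table + i"]
      unfolding I_def table_def by auto
    moreover have "\<forall>v<Suc i. m'' (table + v) = int (addr v)"
      using inv m''(2) data_cell_table unfolding I_def same_data_def by (auto simp: less_Suc_eq)
    ultimately show "\<exists>m'' out''. reaches \<lparr>pc = b + 18, mem = m', outp = out'\<rparr> 9 \<lparr>pc = b + 18, mem = m'', outp = out''\<rparr>
      \<and> I (Suc i) m'' out''"
      using inv unfolding I_def by blast
  qed (use assms in \<open>simp add: I_def\<close>)
  then show ?thesis unfolding I_def addr_table_def by (auto simp: mult.commute)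
qed

lemma prepare_tables:
  assumes "m 0 = int n" "input_intact m"
  shows "\<exists>m'. reaches \<lparr>pc = b, mem = m, outp = out\<rparr> (16 * n + 17) \<lparr>pc = b + 29, mem = m', outp = out\<rparr>
    \<and> main_inv m' \<and> m' (r+12) = 0"
proof -
  obtain m1 where 1: "reaches \<lparr>pc = b, mem = m, outp = out\<rparr> 5 \<lparr>pc = b + 5, mem = m1, outp = out\<rparr>"
    "same_data m m1" "m1 (r+3) = 0" "m1 (r+4) = 1" "m1 (r+5) = int n" "m1 (r+9) = 0" "m1 (r+8) = int (addr 0)"
    using start_to_end_scan[of m out] assms(1) by blast
  obtain m2 where 2: "reaches \<lparr>pc = b + 5, mem = m1, outp = out\<rparr> (7 * n) \<lparr>pc = b + 5, mem = m2, outp = out\<rparr>"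
    "same_data m1 m2" "m2 (r+3) = 0" "m2 (r+4) = 1" "m2 (r+5) = int n" "m2 (r+9) = int n" "m2 (r+8) = int E"
    using end_scan_loop 1 input_intact_same_data[OF 1(2) assms(2)] by blast
  obtain m3 where 3: "reaches \<lparr>pc = b + 5, mem = m2, outp = out\<rparr> 8 \<lparr>pc = b + 18, mem = m3, outp = out\<rparr>"
    "same_data m2 m3" "m3 (r+3) = 0" "m3 (r+4) = 1" "m3 (r+5) = int n" "m3 (r+6) = int table"
    "m3 (r+7) = int bucket_shift" "m3 (r+9) = 0" "m3 (r+8) = int (addr 0)"
    using end_scan_to_table 2 by blast
  have "input_intact m3"
    using assms(2) 1(2) 2(2) 3(2) input_intact_same_data by blast
  then obtain m4 where 4: "reaches \<lparr>pc = b + 18, mem = m3, outp = out\<rparr> (9 * n) \<lparr>pc = b + 18, mem = m4, outp = out\<rparr>"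
    "input_intact m4" "addr_table m4" "m4 (r+3) = 0" "m4 (r+4) = 1" "m4 (r+5) = int n"
    "m4 (r+6) = int table" "m4 (r+7) = int bucket_shift" "m4 (r+9) = int n"
    using table_loop 3 by blast
  obtain m5 where 5: "reaches \<lparr>pc = b + 18, mem = m4, outp = out\<rparr> 4 \<lparr>pc = b + 29, mem = m5, outp = out\<rparr>"
    "same_data m4 m5" "\<forall>j<25. j \<notin> {10, 12} \<longrightarrow> m5 (r + j) = m4 (r + j)" "m5 (r+12) = 0"
    using table_to_vertex 4 by blast
  have "main_inv m5"
    using 4 5 input_intact_same_data addr_table_same_data unfolding main_inv_def by simp
  moreover have "reaches \<lparr>pc = b, mem = m, outp = out\<rparr> (5 + 7 * n + 8 + 9 * n + 4) \<lparr>pc = b + 29, mem = m5, outp = out\<rparr>"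
    using 1(1) 2(1) 3(1) 4(1) 5(1) by (blast intro: reaches_trans)
  ultimately show ?thesis using 5(4) by (auto simp: algebra_simps)
qed

definition at_vertex :: "(nat \<Rightarrow> int) \<Rightarrow> nat \<Rightarrow> bool" where
  "at_vertex m u \<longleftrightarrow> main_inv m \<and> m (r+12) = int u"

definition at_neighbour :: "(nat \<Rightarrow> int) \<Rightarrow> nat \<Rightarrow> nat \<Rightarrow> bool" where
  "at_neighbour m u i \<longleftrightarrow> at_vertex m u \<and> m (r+14) = int (addr u + deg u + 1)
     \<and> m (r+15) = int (addr u + 1 + i)"

definition at_wedge :: "(nat \<Rightarrow> int) \<Rightarrow> nat \<Rightarrow> nat \<Rightarrow> nat \<Rightarrow> bool" where
  "at_wedge m u i j \<longleftrightarrow> at_neighbour m u i \<and> m (r+16) = int (adj ! u ! i)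
     \<and> m (r+18) = int (addr (adj ! u ! i) + deg (adj ! u ! i) + 1)
     \<and> m (r+19) = int (addr (adj ! u ! i) + 1 + j)"

lemma report_loop:
  assumes "m (r+4) = 1" "m (r+12) = int u" "m (r+16) = int v" "m (r+20) = int w"
    "m (r+23) = int (bucket w + 1)" "m (r+24) = int (bucket w + 1 + length L)"
    "\<forall>k<length L. m (bucket w + 1 + k) = int (L ! k)" "w < n" "length L < deg w"
  shows "\<exists>m'. reaches \<lparr>pc = b + 70, mem = m, outp = out\<rparr> (9 * length L)
      \<lparr>pc = b + 70, mem = m', outp = out @ encode_quads (map (\<lambda>v'. (u, v', w, v)) L)\<rparr>
    \<and> same_data m m' \<and> m' (r+23) = int (bucket w + 1 + length L)
    \<and> (\<forall>j<25. j \<notin> {10, 23} \<longrightarrow> m' (r + j) = m (r + j))"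
proof -
  define I where "I k m' out' \<longleftrightarrow> out' = out @ encode_quads (map (\<lambda>v'. (u, v', w, v)) (take k L))
    \<and> same_data m m' \<and> m' (r+23) = int (bucket w + 1 + k)
    \<and> (\<forall>j<25. j \<notin> {10, 23} \<longrightarrow> m' (r + j) = m (r + j))" for k m' out'
  have cap: "bucket w + 1 + length L \<le> value_cap"
    using bucket_le_cap[of w "1 + length L"] assms(8,9) by (simp add: add.assoc)
  have "\<exists>m' out'. reaches \<lparr>pc = b + 70, mem = m, outp = out\<rparr> (\<Sum>k<length L. 9)
      \<lparr>pc = b + 70, mem = m', outp = out'\<rparr> \<and> I (length L) m' out'"
  proof (rule reaches_loop)
    fix k m' out' assume k: "k < length L" and inv: "I k m' out'"
    have cell: "data_cell (bucket w + 1 + k)" "m' (bucket w + 1 + k) = int (L ! k)"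
      using data_cell_bucket[OF assms(8), of "1 + k"] assms(7) k inv
      unfolding I_def same_data_def by (simp_all add: add.assoc)
    have keep: "m' (r + j) = m (r + j)" if "j < 25" "j \<notin> {10, 23}" for j
      using inv that unfolding I_def by blast
    have "m' (r+4) = 1" "m' (r+12) = int u" "m' (r+16) = int v" "m' (r+20) = int w"
      "m' (r+23) = int (bucket w + 1 + k)" "m' (r+24) = int (bucket w + 1 + length L)"
      "bucket w + 1 + k < bucket w + 1 + length L"
      using keep[of 4] keep[of 12] keep[of 16] keep[of 20] keep[of 24] assms inv k unfolding I_def by simp_all
    from report_iter[OF this cell cap] obtain m'' where "reaches \<lparr>pc = b + 70, mem = m', outp = out'\<rparr> 9
        \<lparr>pc = b + 70, mem = m'', outp = out' @ [int u, int (L ! k), int w, int v]\<rparr>"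
      "same_data m' m''" "m'' (r+23) = int (Suc (bucket w + 1 + k))"
      "\<forall>j<25. j \<notin> {10, 23} \<longrightarrow> m'' (r + j) = m' (r + j)"
      by blast
    moreover have "out' @ [int u, int (L ! k), int w, int v]
        = out @ encode_quads (map (\<lambda>v'. (u, v', w, v)) (take (Suc k) L))"
      using inv k unfolding I_def by (simp add: take_Suc_conv_app_nth)
    ultimately show "\<exists>m'' out''. reaches \<lparr>pc = b + 70, mem = m', outp = out'\<rparr> 9
        \<lparr>pc = b + 70, mem = m'', outp = out''\<rparr> \<and> I (Suc k) m'' out''"
      using inv same_data_trans unfolding I_def by auto
  qed (use assms in \<open>simp add: I_def\<close>)
  then show ?thesis unfolding I_def by (auto simp: mult.commute)
qed

lemma at_wedgeD:
  assumes "at_wedge m u i j" "u < n" "i < deg u" "j < deg (adj ! u ! i)"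
  shows "main_inv m" "m (r+12) = int u" "m (r+16) = int (adj ! u ! i)"
    "m (r+18) = int (addr (adj ! u ! i) + deg (adj ! u ! i) + 1)" "m (r+19) = int (addr (adj ! u ! i) + 1 + j)"
    "data_cell (addr (adj ! u ! i) + 1 + j)" "m (addr (adj ! u ! i) + 1 + j) = int (adj ! (adj ! u ! i) ! j)"
    "addr (adj ! u ! i) + deg (adj ! u ! i) + 1 \<le> value_cap"
proof -
  have v: "adj ! u ! i < n" using nbr_less[OF valid assms(2,3)] .
  show "main_inv m" "m (r+12) = int u" "m (r+16) = int (adj ! u ! i)"
    "m (r+18) = int (addr (adj ! u ! i) + deg (adj ! u ! i) + 1)" "m (r+19) = int (addr (adj ! u ! i) + 1 + j)"
    using assms(1) unfolding at_wedge_def at_neighbour_def at_vertex_def by auto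
  then show "data_cell (addr (adj ! u ! i) + 1 + j)" "m (addr (adj ! u ! i) + 1 + j) = int (adj ! (adj ! u ! i) ! j)"
    using data_cell_list[OF v, of "Suc j"] assms(4) v unfolding main_inv_def input_intact_def by auto
  show "addr (adj ! u ! i) + deg (adj ! u ! i) + 1 \<le> value_cap"
    using list_cell_lt_E[OF v, of "deg (adj ! u ! i)"] unfolding value_cap_def by simp
qed

lemma at_wedge_Suc:
  assumes "at_wedge m u i j" "main_inv m'" "m' (r+19) = int (addr (adj ! u ! i) + 1 + Suc j)"
    "\<forall>k\<in>{12, 14, 15, 16, 18}. m' (r + k) = m (r + k)"
  shows "at_wedge m' u i (Suc j)"
  using assms unfolding at_wedge_def at_neighbour_def at_vertex_def by auto

lemma wedge_iter_back:
  assumes u: "u < n" and i: "i < deg u" and j: "j < deg (adj ! u ! i)"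
    and w: "adj ! (adj ! u ! i) ! j = u"
    and at: "at_wedge m u i j" and bk: "buckets m (partners_upto adj u i j)"
  shows "\<exists>m'. reaches \<lparr>pc = b + 58, mem = m, outp = out\<rparr> (cost_w adj u (take i (adj ! u)) u)
      \<lparr>pc = b + 58, mem = m', outp = out @ encode_quads (cycles_via_w adj u (take i (adj ! u)) (adj ! u ! i) u)\<rparr>
    \<and> at_wedge m' u i (Suc j) \<and> buckets m' (partners_upto adj u i (Suc j))"
proof -
  note at' = at_wedgeD[OF at u i j]
  obtain m' where m': "reaches \<lparr>pc = b + 58, mem = m, outp = out\<rparr> 7 \<lparr>pc = b + 58, mem = m', outp = out\<rparr>"
    "same_data m m'" "m' (r+19) = int (Suc (addr (adj ! u ! i) + 1 + j))"
    "\<forall>k<25. k \<notin> {10, 19, 20} \<longrightarrow> m' (r + k) = m (r + k)"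
    using wedge_back[OF _ at'(2,4,5) _ at'(6) _ at'(8)] at'(1,7) j w unfolding main_inv_def by auto
  have "main_inv m'" using main_inv_same_data[OF m'(2) at'(1)] m'(4) by simp
  then have "at_wedge m' u i (Suc j)" using at_wedge_Suc[OF at] m'(3,4) by simp
  moreover have "buckets m' (partners_upto adj u i (Suc j))"
    using buckets_same_data[OF m'(2) bk] partners_upto_Suc_self[OF valid u i j w] by simp
  moreover have "reaches \<lparr>pc = b + 58, mem = m, outp = out\<rparr> (cost_w adj u (take i (adj ! u)) u)
      \<lparr>pc = b + 58, mem = m', outp = out\<rparr>"
    using m'(1) by (rule reaches_mono) (simp add: cost_w_def)
  ultimately show ?thesis by (auto simp: cycles_via_w_def partners_def)
qed

lemma report_phase:
  assumes "m (r+4) = 1" "m (r+12) = int u" "m (r+16) = int v" "m (r+19) = int q" "m (r+20) = int w"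
    "m (r+21) = int (bucket w)" "m (r+22) = int (length L)" "m (r+23) = int (bucket w + 1)"
    "m (r+24) = int (bucket w + 1 + length L)" "\<forall>k<length L. m (bucket w + 1 + k) = int (L ! k)"
    "w < n" "length L < deg w" "q \<le> value_cap"
  shows "\<exists>m'. reaches \<lparr>pc = b + 70, mem = m, outp = out\<rparr> (9 * length L + 8)
      \<lparr>pc = b + 58, mem = m', outp = out @ encode_quads (map (\<lambda>v'. (u, v', w, v)) L)\<rparr>
    \<and> same_data (m(bucket w + 1 + length L := int v, bucket w := int (Suc (length L)))) m'
    \<and> m' (r+19) = int (Suc q) \<and> (\<forall>k<25. k \<notin> {10, 19, 22, 23} \<longrightarrow> m' (r + k) = m (r + k))"
proof -
  let ?out = "out @ encode_quads (map (\<lambda>v'. (u, v', w, v)) L)" and ?e = "bucket w + 1 + length L"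
  obtain m1 where 1: "reaches \<lparr>pc = b + 70, mem = m, outp = out\<rparr> (9 * length L) \<lparr>pc = b + 70, mem = m1, outp = ?out\<rparr>"
    "same_data m m1" "m1 (r+23) = int ?e" "\<forall>k<25. k \<notin> {10, 23} \<longrightarrow> m1 (r + k) = m (r + k)"
    using report_loop[OF assms(1-3,5,8-12)] by blast
  have "?e \<le> value_cap" "length L \<le> value_cap" "data_cell ?e" "data_cell (bucket w)"
    using bucket_le_cap[OF assms(11), of "1 + length L"] data_cell_bucket[OF assms(11), of 0]
      data_cell_bucket[OF assms(11), of "1 + length L"] assms(12)
    by (auto simp: add.assoc)
  then obtain m2 where 2: "reaches \<lparr>pc = b + 70, mem = m1, outp = ?out\<rparr> 8 \<lparr>pc = b + 58, mem = m2, outp = ?out\<rparr>"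
    "same_data (m1(?e := int v, bucket w := int (Suc (length L)))) m2" "m2 (r+19) = int (Suc q)"
    "\<forall>k<25. k \<notin> {10, 19, 22} \<longrightarrow> m2 (r + k) = m1 (r + k)"
    using report_to_wedge[of m1 v q "bucket w" "length L" ?e ?out] 1(3,4) assms(1,3,4,6,7,9,13) by auto
  have "same_data (m(?e := int v, bucket w := int (Suc (length L)))) m2"
    using same_data_trans[OF same_data_upd[OF same_data_upd[OF 1(2)]] 2(2)] .
  then show ?thesis
    using reaches_trans[OF 1(1) 2(1)] 1(4) 2(3,4) by auto
qed

lemma at_wedge_after_append:
  assumes u: "u < n" and i: "i < deg u" and j: "j < deg (adj ! u ! i)"
    and w: "w = adj ! (adj ! u ! i) ! j" "w \<noteq> u" and wn: "w < n"
    and at: "at_wedge m u i j" and bk: "buckets m (partners_upto adj u i j)"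
    and c: "c = length (partners_upto adj u i j w)"
    and same: "same_data (m(bucket w + 1 + c := int (adj ! u ! i), bucket w := int (Suc c))) m'"
    and regs: "\<forall>k\<in>{3, 4, 5, 6, 7, 12, 14, 15, 16, 18}. m' (r + k) = m (r + k)"
    and next_wedge: "m' (r+19) = int (addr (adj ! u ! i) + 1 + Suc j)"
  shows "at_wedge m' u i (Suc j) \<and> buckets m' (partners_upto adj u i (Suc j))"
proof -
  let ?m = "m(bucket w + 1 + c := int (adj ! u ! i), bucket w := int (Suc c))"
  have room: "c < deg w" unfolding c using length_partners_upto_less[OF valid u i j w] .
  have "buckets ?m (partners_upto adj u i (Suc j))"
    using buckets_append[OF bk wn room[unfolded c], of "adj ! u ! i"] partners_upto_Suc[OF valid u i j w]
    unfolding c by simp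
  moreover have "main_inv ?m"
    using at_wedgeD(1)[OF at u i j] main_inv_upd_high bucket_cell_ge[OF wn, of 0]
      bucket_cell_ge[OF wn, of "1 + c"]
    by (simp add: add.assoc)
  moreover have "\<forall>k\<in>{3, 4, 5, 6, 7}. m' (r + k) = ?m (r + k)"
    using regs data_cell_bucket[OF wn, of 0] data_cell_bucket[OF wn, of "1 + c"] by (auto simp: add.assoc)
  ultimately have "buckets m' (partners_upto adj u i (Suc j))" "main_inv m'"
    using buckets_same_data[OF same] main_inv_same_data[OF same] by auto
  then show ?thesis
    using at_wedge_Suc[of m u i j m'] at next_wedge regs by auto
qed

lemma wedge_iter_report:
  assumes u: "u < n" and i: "i < deg u" and j: "j < deg (adj ! u ! i)"
    and w: "w = adj ! (adj ! u ! i) ! j" "w \<noteq> u"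
    and at: "at_wedge m u i j" and bk: "buckets m (partners_upto adj u i j)"
  shows "\<exists>m'. reaches \<lparr>pc = b + 58, mem = m, outp = out\<rparr> (cost_w adj u (take i (adj ! u)) w)
      \<lparr>pc = b + 58, mem = m', outp = out @ encode_quads (cycles_via_w adj u (take i (adj ! u)) (adj ! u ! i) w)\<rparr>
    \<and> at_wedge m' u i (Suc j) \<and> buckets m' (partners_upto adj u i (Suc j))"
proof -
  note at' = at_wedgeD[OF at u i j]
  let ?v = "adj ! u ! i" and ?L = "partners_upto adj u i j w"
  define c where "c = length ?L"
  have wn: "w < n" using w valid_adjD(2)[OF valid nbr_less[OF valid u i]] j by simp
  have L: "?L = partners adj u (take i (adj ! u)) w" using partners_upto_current[OF valid u i j] w by simp
  have room: "c < deg w" unfolding c_def using length_partners_upto_less[OF valid u i j w] .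
  have slots: "m (bucket w) = int c" "\<forall>k<c. m (bucket w + 1 + k) = int (?L ! k)"
    using bk wn unfolding buckets_def c_def by auto
  have inv: "m (r+4) = 1" "m (r+6) = int table" "m (r+7) = int bucket_shift" "m (table + w) = int (addr w)"
    using at'(1) wn unfolding main_inv_def addr_table_def by auto
  have q: "addr ?v + 1 + j < addr ?v + deg ?v + 1" "m (addr ?v + 1 + j) = int w"
    using j at'(7) w(1) by auto
  obtain m1 where 1: "reaches \<lparr>pc = b + 58, mem = m, outp = out\<rparr> 12 \<lparr>pc = b + 70, mem = m1, outp = out\<rparr>"
    "same_data m m1" "m1 (r+20) = int w" "m1 (r+21) = int (bucket w)" "m1 (r+22) = int c"
    "m1 (r+23) = int (bucket w + 1)" "m1 (r+24) = int (bucket w + 1 + c)"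
    "\<forall>k<25. k \<notin> {10, 11, 20, 21, 22, 23, 24} \<longrightarrow> m1 (r + k) = m (r + k)"
    using wedge_to_report[OF inv(1-3) at'(2,4,5) q(1) at'(6) q(2) w(2) wn u at'(8) inv(4) slots(1)] room
    by auto
  have "m1 (bucket w + 1 + k) = m (bucket w + 1 + k)" for k
    using 1(2) data_cell_bucket[OF wn, of "1 + k"] unfolding same_data_def by (simp add: add.assoc)
  then have "m1 (r+4) = 1" "m1 (r+12) = int u" "m1 (r+16) = int ?v" "m1 (r+19) = int (addr ?v + 1 + j)"
    "\<forall>k<c. m1 (bucket w + 1 + k) = int (?L ! k)" "addr ?v + 1 + j \<le> value_cap"
    using 1(8) inv(1) at'(2,3,5,8) slots(2) q(1) by auto
  from report_phase[OF this(1-4) 1(3,4) 1(5)[unfolded c_def] 1(6) 1(7)[unfolded c_def]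
      this(5)[unfolded c_def] wn room[unfolded c_def] this(6)]
  obtain m2 where 2: "reaches \<lparr>pc = b + 70, mem = m1, outp = out\<rparr> (9 * c + 8)
      \<lparr>pc = b + 58, mem = m2, outp = out @ encode_quads (cycles_via_w adj u (take i (adj ! u)) ?v w)\<rparr>"
    "same_data (m1(bucket w + 1 + c := int ?v, bucket w := int (Suc c))) m2"
    "m2 (r+19) = int (Suc (addr ?v + 1 + j))" "\<forall>k<25. k \<notin> {10, 19, 22, 23} \<longrightarrow> m2 (r + k) = m1 (r + k)"
    unfolding c_def L cycles_via_w_def by blast
  have "same_data (m(bucket w + 1 + c := int ?v, bucket w := int (Suc c))) m2"
    using same_data_trans[OF same_data_upd[OF same_data_upd[OF 1(2)]] 2(2)] .
  moreover have "\<forall>k\<in>{3, 4, 5, 6, 7, 12, 14, 15, 16, 18}. m2 (r + k) = m (r + k)"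
    using 1(8) 2(4) by auto
  ultimately have "at_wedge m2 u i (Suc j) \<and> buckets m2 (partners_upto adj u i (Suc j))"
    using at_wedge_after_append[OF u i j w wn at bk c_def] 2(3) by simp
  moreover have "reaches \<lparr>pc = b + 58, mem = m, outp = out\<rparr> (cost_w adj u (take i (adj ! u)) w)
      \<lparr>pc = b + 58, mem = m2, outp = out @ encode_quads (cycles_via_w adj u (take i (adj ! u)) ?v w)\<rparr>"
    using reaches_trans[OF 1(1) 2(1)] by (rule reaches_mono) (simp add: cost_w_def c_def L)
  ultimately show ?thesis by blast
qed

lemma wedge_iter:
  assumes "u < n" "i < deg u" "j < deg (adj ! u ! i)"
    and "at_wedge m u i j" "buckets m (partners_upto adj u i j)"
  shows "\<exists>m'. reaches \<lparr>pc = b + 58, mem = m, outp = out\<rparr> (cost_w adj u (take i (adj ! u)) (adj ! (adj ! u ! i) ! j))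
      \<lparr>pc = b + 58, mem = m', outp = out @ encode_quads
        (cycles_via_w adj u (take i (adj ! u)) (adj ! u ! i) (adj ! (adj ! u ! i) ! j))\<rparr>
    \<and> at_wedge m' u i (Suc j) \<and> buckets m' (partners_upto adj u i (Suc j))"
proof (cases "adj ! (adj ! u ! i) ! j = u")
  case True
  then show ?thesis using wedge_iter_back[OF assms(1-3) True assms(4,5)] by simp
next
  case False
  then show ?thesis using wedge_iter_report[OF assms(1-3) refl False assms(4,5)] by simp
qed

lemma wedge_loop:
  assumes u: "u < n" and i: "i < deg u"
    and "at_wedge m u i 0" "buckets m (partners adj u (take i (adj ! u)))"
  shows "\<exists>m'. reaches \<lparr>pc = b + 58, mem = m, outp = out\<rparr>
      (\<Sum>w\<leftarrow>adj ! (adj ! u ! i). cost_w adj u (take i (adj ! u)) w)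
      \<lparr>pc = b + 58, mem = m', outp = out @ encode_quads (cycles_via_v adj u (take i (adj ! u)) (adj ! u ! i))\<rparr>
    \<and> at_wedge m' u i (deg (adj ! u ! i)) \<and> buckets m' (partners adj u (take (Suc i) (adj ! u)))"
proof -
  let ?v = "adj ! u ! i" and ?vs = "take i (adj ! u)"
  define I where "I j m' out' \<longleftrightarrow>
    out' = out @ encode_quads (concat (map (cycles_via_w adj u ?vs ?v) (take j (adj ! ?v))))
    \<and> at_wedge m' u i j \<and> buckets m' (partners_upto adj u i j)" for j m' out'
  have "\<exists>m' out'. reaches \<lparr>pc = b + 58, mem = m, outp = out\<rparr> (\<Sum>j<deg ?v. cost_w adj u ?vs (adj ! ?v ! j))
      \<lparr>pc = b + 58, mem = m', outp = out'\<rparr> \<and> I (deg ?v) m' out'"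
  proof (rule reaches_loop)
    fix j m' out' assume j: "j < deg ?v" and "I j m' out'"
    then show "\<exists>m'' out''. reaches \<lparr>pc = b + 58, mem = m', outp = out'\<rparr> (cost_w adj u ?vs (adj ! ?v ! j))
        \<lparr>pc = b + 58, mem = m'', outp = out''\<rparr> \<and> I (Suc j) m'' out''"
      using wedge_iter[OF u i j, of m' out'] unfolding I_def by (auto simp: take_Suc_conv_app_nth)
  qed (use assms in \<open>simp add: I_def partners_upto_0\<close>)
  then show ?thesis
    unfolding I_def cycles_via_v_def sum_list_map_conv_sum_nth partners_upto_end[OF i] by simp
qed

lemma at_neighbourD:
  assumes "at_neighbour m u i" "u < n" "i < deg u"
  shows "main_inv m" "m (r+4) = 1" "m (r+6) = int table" "m (r+12) = int u"
    "m (r+14) = int (addr u + deg u + 1)" "m (r+15) = int (addr u + 1 + i)"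
    "data_cell (addr u + 1 + i)" "m (addr u + 1 + i) = int (adj ! u ! i)"
    "m (table + adj ! u ! i) = int (addr (adj ! u ! i))"
    "m (addr (adj ! u ! i)) = int (deg (adj ! u ! i))"
    "addr u + deg u + 1 \<le> value_cap"
proof -
  have v: "adj ! u ! i < n" using nbr_less[OF valid assms(2,3)] .
  show "main_inv m" "m (r+12) = int u" "m (r+14) = int (addr u + deg u + 1)"
    "m (r+15) = int (addr u + 1 + i)"
    using assms(1) unfolding at_neighbour_def at_vertex_def by auto
  then show "m (r+4) = 1" "m (r+6) = int table" "data_cell (addr u + 1 + i)"
    "m (addr u + 1 + i) = int (adj ! u ! i)" "m (table + adj ! u ! i) = int (addr (adj ! u ! i))"
    "m (addr (adj ! u ! i)) = int (deg (adj ! u ! i))"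
    using data_cell_list[OF assms(2), of "Suc i"] assms(2,3) v
    unfolding main_inv_def input_intact_def addr_table_def by auto
  show "addr u + deg u + 1 \<le> value_cap"
    using list_cell_lt_E[OF assms(2), of "deg u"] unfolding value_cap_def by simp
qed

lemma neighbour_iter:
  assumes u: "u < n" and i: "i < deg u"
    and at: "at_neighbour m u i" and bk: "buckets m (partners adj u (take i (adj ! u)))"
  shows "\<exists>m'. reaches \<lparr>pc = b + 48, mem = m, outp = out\<rparr> (cost_v adj u (take i (adj ! u)) (adj ! u ! i))
      \<lparr>pc = b + 48, mem = m', outp = out @ encode_quads (cycles_via_v adj u (take i (adj ! u)) (adj ! u ! i))\<rparr>
    \<and> at_neighbour m' u (Suc i) \<and> buckets m' (partners adj u (take (Suc i) (adj ! u)))"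
proof -
  note at' = at_neighbourD[OF at u i]
  let ?v = "adj ! u ! i" and ?out = "out @ encode_quads (cycles_via_v adj u (take i (adj ! u)) (adj ! u ! i))"
  have v: "?v < n" using nbr_less[OF valid u i] .
  obtain m1 where 1: "reaches \<lparr>pc = b + 48, mem = m, outp = out\<rparr> 10 \<lparr>pc = b + 58, mem = m1, outp = out\<rparr>"
    "same_data m m1" "m1 (r+16) = int ?v" "m1 (r+17) = int (addr ?v)"
    "m1 (r+18) = int (addr ?v + deg ?v + 1)" "m1 (r+19) = int (addr ?v + 1)"
    "\<forall>k<25. k \<notin> {10, 11, 16, 17, 18, 19} \<longrightarrow> m1 (r + k) = m (r + k)"
    using neighbour_to_wedge[OF at'(2,3,5,6) _ at'(7,8) v at'(9,10,11)] i by auto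
  have "main_inv m1" using main_inv_same_data[OF 1(2) at'(1)] 1(7) by simp
  then have "at_wedge m1 u i 0"
    using at 1(3,5,6,7) unfolding at_wedge_def at_neighbour_def at_vertex_def by simp
  then obtain m2 where 2: "reaches \<lparr>pc = b + 58, mem = m1, outp = out\<rparr>
      (\<Sum>w\<leftarrow>adj ! ?v. cost_w adj u (take i (adj ! u)) w) \<lparr>pc = b + 58, mem = m2, outp = ?out\<rparr>"
    "at_wedge m2 u i (deg ?v)" "buckets m2 (partners adj u (take (Suc i) (adj ! u)))"
    using wedge_loop[OF u i _ buckets_same_data[OF 1(2) bk]] by blast
  have "m2 (r+4) = 1" "m2 (r+15) = int (addr u + 1 + i)" "m2 (r+18) = int (addr ?v + deg ?v + 1)"
    "m2 (r+19) = int (addr ?v + deg ?v + 1)" "main_inv m2"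
    using 2(2) unfolding at_wedge_def at_neighbour_def at_vertex_def main_inv_def by auto
  moreover have "addr u + 1 + i \<le> value_cap" "addr ?v + deg ?v + 1 \<le> value_cap"
    using at'(11) i list_cell_le_cap[OF v, of "deg ?v"] list_cell_lt_E[OF v, of "deg ?v"]
    unfolding value_cap_def by auto
  ultimately obtain m3 where 3: "reaches \<lparr>pc = b + 58, mem = m2, outp = ?out\<rparr> 5 \<lparr>pc = b + 48, mem = m3, outp = ?out\<rparr>"
    "same_data m2 m3" "m3 (r+15) = int (Suc (addr u + 1 + i))"
    "\<forall>k<25. k \<notin> {10, 15} \<longrightarrow> m3 (r + k) = m2 (r + k)"
    using wedge_to_neighbour by blast
  have "main_inv m3" using main_inv_same_data[OF 3(2) \<open>main_inv m2\<close>] 3(4) by simp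
  then have "at_neighbour m3 u (Suc i)"
    using 2(2) 3(3,4) unfolding at_wedge_def at_neighbour_def at_vertex_def by simp
  moreover have "reaches \<lparr>pc = b + 48, mem = m, outp = out\<rparr> (cost_v adj u (take i (adj ! u)) ?v)
      \<lparr>pc = b + 48, mem = m3, outp = ?out\<rparr>"
    using reaches_trans[OF reaches_trans[OF 1(1) 2(1)] 3(1)]
    by (rule reaches_mono) (simp add: cost_v_def)
  ultimately show ?thesis using buckets_same_data[OF 3(2) 2(3)] by blast
qed

lemma neighbour_loop:
  assumes u: "u < n" and "at_neighbour m u 0" "buckets m (\<lambda>_. [])"
  shows "\<exists>m'. reaches \<lparr>pc = b + 48, mem = m, outp = out\<rparr>
      (\<Sum>i<deg u. cost_v adj u (take i (adj ! u)) (adj ! u ! i))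
      \<lparr>pc = b + 48, mem = m', outp = out @ encode_quads (cycles_at adj u)\<rparr> \<and> at_neighbour m' u (deg u)"
proof -
  define I where "I i m' out' \<longleftrightarrow>
    out' = out @ encode_quads (concat (map (\<lambda>i. cycles_via_v adj u (take i (adj ! u)) (adj ! u ! i)) [0..<i]))
    \<and> at_neighbour m' u i \<and> buckets m' (partners adj u (take i (adj ! u)))" for i m' out'
  have "partners adj u [] = (\<lambda>_. [])" unfolding partners_def by auto
  have "\<exists>m' out'. reaches \<lparr>pc = b + 48, mem = m, outp = out\<rparr>
      (\<Sum>i<deg u. cost_v adj u (take i (adj ! u)) (adj ! u ! i))
      \<lparr>pc = b + 48, mem = m', outp = out'\<rparr> \<and> I (deg u) m' out'"
  proof (rule reaches_loop)
    fix i m' out' assume "i < deg u" "I i m' out'"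
    then show "\<exists>m'' out''. reaches \<lparr>pc = b + 48, mem = m', outp = out'\<rparr>
        (cost_v adj u (take i (adj ! u)) (adj ! u ! i)) \<lparr>pc = b + 48, mem = m'', outp = out''\<rparr>
        \<and> I (Suc i) m'' out''"
      using neighbour_iter[OF u, of i m' out'] unfolding I_def by auto
  qed (use assms(2,3) \<open>partners adj u [] = (\<lambda>_. [])\<close> in \<open>simp add: I_def\<close>)
  then show ?thesis unfolding I_def cycles_at_def by auto
qed

lemma reset_loop:
  assumes "at_vertex m u" "m (r+9) = 0"
  shows "\<exists>m'. reaches \<lparr>pc = b + 33, mem = m, outp = out\<rparr> (8 * n) \<lparr>pc = b + 33, mem = m', outp = out\<rparr>
    \<and> at_vertex m' u \<and> m' (r+9) = int n \<and> buckets m' (\<lambda>_. [])"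
proof -
  define I where "I i m' out' \<longleftrightarrow> out' = out \<and> at_vertex m' u \<and> m' (r+9) = int i
    \<and> (\<forall>w<i. m' (bucket w) = 0)" for i m' out'
  have "\<exists>m' out'. reaches \<lparr>pc = b + 33, mem = m, outp = out\<rparr> (\<Sum>i<n. 8) \<lparr>pc = b + 33, mem = m', outp = out'\<rparr>
    \<and> I n m' out'"
  proof (rule reaches_loop)
    fix i m' out' assume i: "i < n" and inv: "I i m' out'"
    then have "main_inv m'" "m' (r+12) = int u" unfolding I_def at_vertex_def by auto
    then obtain m'' where m'': "reaches \<lparr>pc = b + 33, mem = m', outp = out'\<rparr> 8 \<lparr>pc = b + 33, mem = m'', outp = out'\<rparr>"
      "same_data (m'(bucket i := 0)) m''" "m'' (r+9) = int (Suc i)"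
      "\<forall>k<25. k \<notin> {9, 10, 11} \<longrightarrow> m'' (r + k) = m' (r + k)"
      using reset_iter[of m' i out'] inv i unfolding I_def main_inv_def addr_table_def by auto
    have "main_inv (m'(bucket i := 0))"
      using main_inv_upd_high bucket_cell_ge[OF i, of 0] \<open>main_inv m'\<close> by simp
    then have "main_inv m''"
      using main_inv_same_data[OF m''(2)] m''(4) data_cell_bucket[OF i, of 0] by simp
    moreover have "m'' (bucket w) = 0" if "w < Suc i" for w
    proof -
      have w: "w < n" using that i by simp
      then have "m'' (bucket w) = (if bucket w = bucket i then 0 else m' (bucket w))"
        using m''(2) data_cell_bucket[OF w, of 0] unfolding same_data_def by simp
      then show ?thesis using inv that bucket_inj[OF w i] unfolding I_def by (auto simp: less_Suc_eq)
    qed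
    ultimately show "\<exists>m'' out''. reaches \<lparr>pc = b + 33, mem = m', outp = out'\<rparr> 8
        \<lparr>pc = b + 33, mem = m'', outp = out''\<rparr> \<and> I (Suc i) m'' out''"
      using inv m''(1,3,4) \<open>m' (r+12) = int u\<close> unfolding I_def at_vertex_def by auto
  qed (use assms in \<open>simp add: I_def\<close>)
  then show ?thesis unfolding I_def buckets_def by (auto simp: mult.commute)
qed

lemma vertex_iter:
  assumes u: "u < n" and at: "at_vertex m u"
  shows "\<exists>m'. reaches \<lparr>pc = b + 29, mem = m, outp = out\<rparr> (cost_at adj u)
      \<lparr>pc = b + 29, mem = m', outp = out @ encode_quads (cycles_at adj u)\<rparr> \<and> at_vertex m' (Suc u)"
proof -
  let ?out = "out @ encode_quads (cycles_at adj u)"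
  have inv: "main_inv m" "m (r+12) = int u" using at unfolding at_vertex_def by auto
  then obtain m1 where 1: "reaches \<lparr>pc = b + 29, mem = m, outp = out\<rparr> 3 \<lparr>pc = b + 33, mem = m1, outp = out\<rparr>"
    "same_data m m1" "m1 (r+9) = 0" "\<forall>k<25. k \<notin> {9, 10} \<longrightarrow> m1 (r + k) = m (r + k)"
    using vertex_to_reset[of m u out] inv u unfolding main_inv_def by blast
  have "at_vertex m1 u" using main_inv_same_data[OF 1(2) inv(1)] 1(4) inv(2) unfolding at_vertex_def by simp
  then obtain m2 where 2: "reaches \<lparr>pc = b + 33, mem = m1, outp = out\<rparr> (8 * n) \<lparr>pc = b + 33, mem = m2, outp = out\<rparr>"
    "at_vertex m2 u" "m2 (r+9) = int n" "buckets m2 (\<lambda>_. [])"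
    using reset_loop 1(3) by blast
  then have "main_inv m2" "m2 (r+12) = int u" unfolding at_vertex_def by auto
  then obtain m3 where 3: "reaches \<lparr>pc = b + 33, mem = m2, outp = out\<rparr> 9 \<lparr>pc = b + 48, mem = m3, outp = out\<rparr>"
    "same_data m2 m3" "m3 (r+13) = int (addr u)" "m3 (r+14) = int (addr u + deg u + 1)"
    "m3 (r+15) = int (addr u + 1)" "\<forall>k<25. k \<notin> {10, 11, 13, 14, 15} \<longrightarrow> m3 (r + k) = m2 (r + k)"
    using reset_to_neighbour[of m2 u out] 2(3) u \<open>main_inv m2\<close> \<open>m2 (r+12) = int u\<close>
    unfolding main_inv_def input_intact_def addr_table_def by blast
  have "at_neighbour m3 u 0"
    using main_inv_same_data[OF 3(2) \<open>main_inv m2\<close>] 3(4,5,6) \<open>m2 (r+12) = int u\<close>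
    unfolding at_neighbour_def at_vertex_def by simp
  then obtain m4 where 4: "reaches \<lparr>pc = b + 48, mem = m3, outp = out\<rparr>
      (\<Sum>i<deg u. cost_v adj u (take i (adj ! u)) (adj ! u ! i)) \<lparr>pc = b + 48, mem = m4, outp = ?out\<rparr>"
    "at_neighbour m4 u (deg u)"
    using neighbour_loop[OF u _ buckets_same_data[OF 3(2) 2(4)]] by blast
  then have "main_inv m4" "m4 (r+4) = 1" "m4 (r+12) = int u" "m4 (r+14) = int (addr u + deg u + 1)"
    "m4 (r+15) = int (addr u + deg u + 1)"
    unfolding at_neighbour_def at_vertex_def main_inv_def by auto
  moreover have "addr u + deg u + 1 \<le> value_cap" "u \<le> value_cap"
    using list_cell_lt_E[OF u, of "deg u"] u n_le_cap unfolding value_cap_def by auto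
  ultimately obtain m5 where 5: "reaches \<lparr>pc = b + 48, mem = m4, outp = ?out\<rparr> 5 \<lparr>pc = b + 29, mem = m5, outp = ?out\<rparr>"
    "same_data m4 m5" "m5 (r+12) = int (Suc u)" "\<forall>k<25. k \<notin> {10, 12} \<longrightarrow> m5 (r + k) = m4 (r + k)"
    using neighbour_to_vertex by blast
  have "at_vertex m5 (Suc u)"
    using main_inv_same_data[OF 5(2) \<open>main_inv m4\<close>] 5(3,4) unfolding at_vertex_def by simp
  moreover have "reaches \<lparr>pc = b + 29, mem = m, outp = out\<rparr> (cost_at adj u) \<lparr>pc = b + 29, mem = m5, outp = ?out\<rparr>"
    using reaches_trans[OF reaches_trans[OF reaches_trans[OF reaches_trans[OF 1(1) 2(1)] 3(1)] 4(1)] 5(1)]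
    by (rule reaches_mono) (simp add: cost_at_def)
  ultimately show ?thesis by blast
qed

lemma vertex_loop:
  assumes "at_vertex m 0"
  shows "\<exists>m'. reaches \<lparr>pc = b + 29, mem = m, outp = out\<rparr> (\<Sum>u<n. cost_at adj u)
      \<lparr>pc = b + 29, mem = m', outp = out @ encode_quads (cycle_listing adj)\<rparr> \<and> at_vertex m' n"
proof -
  define I where "I u m' out' \<longleftrightarrow> out' = out @ encode_quads (concat (map (cycles_at adj) [0..<u]))
    \<and> at_vertex m' u" for u m' out'
  have "\<exists>m' out'. reaches \<lparr>pc = b + 29, mem = m, outp = out\<rparr> (\<Sum>u<n. cost_at adj u)
      \<lparr>pc = b + 29, mem = m', outp = out'\<rparr> \<and> I n m' out'"
  proof (rule reaches_loop)
    fix u m' out' assume "u < n" "I u m' out'"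
    then show "\<exists>m'' out''. reaches \<lparr>pc = b + 29, mem = m', outp = out'\<rparr> (cost_at adj u)
        \<lparr>pc = b + 29, mem = m'', outp = out''\<rparr> \<and> I (Suc u) m'' out''"
      using vertex_iter[of u m' out'] unfolding I_def by auto
  qed (use assms in \<open>simp add: I_def\<close>)
  then show ?thesis unfolding I_def cycle_listing_def by auto
qed

theorem lister_run:
  assumes "m 0 = int n" "input_intact m"
  shows "\<exists>m'. reaches \<lparr>pc = b, mem = m, outp = out\<rparr> (cost_listing adj)
    \<lparr>pc = b + 89, mem = m', outp = out @ encode_quads (cycle_listing adj)\<rparr>"
proof -
  let ?out = "out @ encode_quads (cycle_listing adj)"
  obtain m1 where 1: "reaches \<lparr>pc = b, mem = m, outp = out\<rparr> (16 * n + 17) \<lparr>pc = b + 29, mem = m1, outp = out\<rparr>"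
    "at_vertex m1 0"
    using prepare_tables[OF assms] unfolding at_vertex_def by auto
  then obtain m2 where 2: "reaches \<lparr>pc = b + 29, mem = m1, outp = out\<rparr> (\<Sum>u<n. cost_at adj u)
      \<lparr>pc = b + 29, mem = m2, outp = ?out\<rparr>" "at_vertex m2 n"
    using vertex_loop by blast
  then obtain m3 where 3: "reaches \<lparr>pc = b + 29, mem = m2, outp = ?out\<rparr> 3 \<lparr>pc = b + 89, mem = m3, outp = ?out\<rparr>"
    using vertex_to_halt unfolding at_vertex_def main_inv_def by blast
  have "reaches \<lparr>pc = b, mem = m, outp = out\<rparr> (cost_listing adj) \<lparr>pc = b + 89, mem = m3, outp = ?out\<rparr>"
    using reaches_trans[OF reaches_trans[OF 1(1) 2(1)] 3]
    by (rule reaches_mono) (simp add: cost_listing_def)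
  then show ?thesis by blast
qed

lemma input_intact_init: "input_intact (mem (init_conf adj))"
  unfolding input_intact_def
proof (intro allI impI conjI)
  fix v assume v: "v < n"
  have "addr v + j < length (encode_adj adj)" if "j \<le> deg v" for j
    using list_cell_lt_E[OF v that] length_encode_adj by simp
  from this[of 0] this[of "Suc _"] encode_adj_nth[OF v, of 0] encode_adj_nth[OF v, of "Suc _"]
  show "mem (init_conf adj) (addr v) = int (deg v)"
    "\<And>j. j < deg v \<Longrightarrow> mem (init_conf adj) (addr v + 1 + j) = int (adj ! v ! j)"
    unfolding init_conf_def by auto
qed

lemma bounded_init: "bounded (mem (init_conf adj))"
  unfolding bounded_def init_conf_def
proof (intro allI)
  fix a
  have "\<bar>encode_adj adj ! a\<bar> \<le> B" if "a < length (encode_adj adj)"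
    using encode_adj_bounds[OF valid nth_mem[OF that]] B_large by simp
  then show "\<bar>mem \<lparr>pc = 0, mem = \<lambda>a. if a < length (encode_adj adj) then encode_adj adj ! a else 0, outp = []\<rparr> a\<bar> \<le> B"
    using B_large by simp
qed

lemma input_intact_upd_low:
  assumes "a \<le> 1"
  shows "input_intact (m(a := x)) \<longleftrightarrow> input_intact m"
proof (rule input_intact_upd)
  show "a < addr 0 \<or> E \<le> a"
  proof (cases "n = 0")
    case True
    then have "E = addr 0" by (simp only:)
    then show ?thesis using list_addr_0[of adj] True assms by auto
  next
    case False
    then have "a < addr 0" using list_addr_0[of adj] assms by linarith
    then show ?thesis ..
  qed
qed

lemma lister_halts:
  assumes "reaches (init_conf adj) K \<lparr>pc = b, mem = m, outp = []\<rparr>" "m 0 = int n" "input_intact m"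
  shows "\<exists>k\<le>K + cost_listing adj. halted P ((step P ^^ k) (init_conf adj))
    \<and> outp ((step P ^^ k) (init_conf adj)) = encode_quads (cycle_listing adj)
    \<and> (\<forall>j a. \<bar>mem ((step P ^^ j) (init_conf adj)) a\<bar> \<le> B)"
proof -
  obtain m' where "reaches \<lparr>pc = b, mem = m, outp = []\<rparr> (cost_listing adj)
      \<lparr>pc = b + 89, mem = m', outp = encode_quads (cycle_listing adj)\<rparr>"
    using lister_run[OF assms(2,3), of "[]"] by auto
  moreover have "halted P \<lparr>pc = b + 89, mem = m', outp = encode_quads (cycle_listing adj)\<rparr>"
    using code[of 89] unfolding halted_def by (simp add: lister_code_def)
  ultimately show ?thesis
    using reaches_halted[OF reaches_trans[OF assms(1)] bounded_init] unfolding bounded_def by fastforce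
qed

end

section \<open>The complete program\<close>

text \<open>The registers of the lister must avoid the input it reads. For \<open>n > 25\<close> the cells \<open>2 .. 26\<close>
  among the list addresses serve; otherwise the whole input lies below \<open>(n + 1)\<^sup>2 \<le> 676\<close>. The
  dispatcher, which uses cell 1 as scratch, jumps to the matching copy of the lister.\<close>

definition dispatcher :: prog where
  "dispatcher = [LoadConst 1 25, Sub 0 0 1, JumpPos 0 5, Add 0 0 1, Goto 96, Add 0 0 1]"

definition lister_prog :: prog where
  "lister_prog = dispatcher @ lister_code 6 2 @ lister_code 96 676"

lemma length_dispatcher: "length dispatcher = 6"
  unfolding dispatcher_def by simp

lemma length_lister_prog: "length lister_prog = 186"
  unfolding lister_prog_def by (simp add: length_dispatcher)

lemma lister_prog_nth:
  "i < 6 \<Longrightarrow> lister_prog ! i = dispatcher ! i"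
  "i < 90 \<Longrightarrow> lister_prog ! (6 + i) = lister_code 6 2 ! i"
  "i < 90 \<Longrightarrow> lister_prog ! (96 + i) = lister_code 96 676 ! i"
  unfolding lister_prog_def by (simp_all add: nth_append length_dispatcher)

text \<open>The constant 60000 serves both as the time constant (at least \<open>200 \<cdot> 256\<close>) and as the
  exponent of the value bound (at least 14).\<close>

lemma power_bound:
  assumes "valid_adj adj" "r \<le> 676"
  shows "4 * int (list_addr adj (length adj) + r + 30) \<le> int ((length adj + 2) ^ 60000)"
proof -
  let ?N = "length adj + 2"
  have "list_addr adj (length adj) \<le> ?N\<^sup>2"
    using list_addr_end_le[OF assms(1)] power_mono[of "length adj + 1" ?N 2] by linarith
  then have "4 * (list_addr adj (length adj) + r + 30) \<le> 2828 * ?N\<^sup>2"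
    using assms(2) one_le_power[of ?N 2] unfolding distrib_left by linarith
  also have "\<dots> \<le> ?N ^ 12 * ?N\<^sup>2"
    using power_mono[of 2 ?N 12] by (intro mult_right_mono) auto
  also have "\<dots> \<le> ?N ^ 60000"
    by (simp only: power_add[symmetric]) (rule power_increasing; simp)
  finally show ?thesis by (simp only: of_nat_le_iff[symmetric] of_nat_mult of_nat_numeral)
qed

lemma cost_listing_bound:
  assumes "valid_adj adj"
  shows "cost_listing adj + 5 \<le> 60000 * ((length adj)\<^sup>2 + card (four_cycles (adj_edge adj))) + 60000"
  using cost_listing_le[OF assms] length_cycle_listing_le[OF assms] unfolding distrib_left by linarith

lemma dispatcher_run:
  assumes "m 0 = int k" "int k + 25 \<le> B"
  shows "bounded_run.reaches lister_prog B \<lparr>pc = 0, mem = m, outp = []\<rparr> 5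
    \<lparr>pc = if 25 < k then 6 else 96, mem = m(1 := 25, 0 := int k), outp = []\<rparr>"
proof -
  interpret M: bounded_run lister_prog B .
  have "M.reaches \<lparr>pc = 0, mem = m, outp = []\<rparr> 5 \<lparr>pc = 6, mem = m(1 := 25, 0 := int k), outp = []\<rparr>"
    if "25 < k"
    using assms that length_lister_prog unfolding M.reaches_def
    by - (intro exI conjI, (rule M.runs_step; simp add: lister_prog_nth(1) dispatcher_def abs_le_iff),
      (rule M.runs_0 | (rule M.runs_step; simp add: lister_prog_nth(1) dispatcher_def abs_le_iff))+,
      simp_all)
  moreover have "M.reaches \<lparr>pc = 0, mem = m, outp = []\<rparr> 5 \<lparr>pc = 96, mem = m(1 := 25, 0 := int k), outp = []\<rparr>"
    if "\<not> 25 < k"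
    using assms that length_lister_prog unfolding M.reaches_def
    by - (intro exI conjI, (rule M.runs_step; simp add: lister_prog_nth(1) dispatcher_def abs_le_iff),
      (rule M.runs_0 | (rule M.runs_step; simp add: lister_prog_nth(1) dispatcher_def abs_le_iff))+,
      simp_all)
  ultimately show ?thesis by simp
qed

lemma lister_prog_correct:
  assumes valid: "valid_adj adj"
  shows "\<exists>k\<le>cost_listing adj + 5. halted lister_prog ((step lister_prog ^^ k) (init_conf adj))
    \<and> outp ((step lister_prog ^^ k) (init_conf adj)) = encode_quads (cycle_listing adj)
    \<and> (\<forall>j a. \<bar>mem ((step lister_prog ^^ j) (init_conf adj)) a\<bar> \<le> int ((length adj + 2) ^ 60000))"
proof -
  define B where "B = int ((length adj + 2) ^ 60000)"
  let ?n = "length adj" and ?m = "(mem (init_conf adj))(1 := 25, 0 := int (length adj))"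
  have "init_conf adj = \<lparr>pc = 0, mem = mem (init_conf adj), outp = []\<rparr>"
    by (simp add: init_conf_def)
  moreover have "int ?n + 25 \<le> B"
    using power_bound[OF valid, of 0] list_addr_ge[of adj ?n] unfolding B_def by simp
  ultimately have dispatch: "bounded_run.reaches lister_prog B (init_conf adj) 5
      \<lparr>pc = if 25 < ?n then 6 else 96, mem = ?m, outp = []\<rparr>"
    using dispatcher_run[of "mem (init_conf adj)" ?n B] init_mem_0 by simp
  show ?thesis
  proof (cases "25 < ?n")
    case True
    interpret L: loaded_lister lister_prog B adj 6 2
      using valid True power_bound[OF valid, of 2] length_lister_prog lister_prog_nth(2) unfolding B_def
      by unfold_locales auto
    show ?thesis
      using L.lister_halts[of 5 ?m] dispatch True L.input_intact_init L.input_intact_upd_low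
      unfolding B_def by (simp add: add.commute)
  next
    case False
    then have "list_addr adj ?n \<le> 676"
      using list_addr_end_le[OF valid] power_mono[of "?n + 1" 26 2] by simp
    interpret L: loaded_lister lister_prog B adj 96 676
      using valid \<open>list_addr adj ?n \<le> 676\<close> power_bound[OF valid, of 676] length_lister_prog
        lister_prog_nth(3) unfolding B_def
      by unfold_locales auto
    show ?thesis
      using L.lister_halts[of 5 ?m] dispatch False L.input_intact_init L.input_intact_upd_low
      unfolding B_def by (simp add: add.commute)
  qed
qed

theorem mainTheorem2:
  shows "\<exists>(P :: prog) (C :: nat). \<forall>adj. valid_adj adj \<longrightarrow>
     (let n = length adj; t = card (four_cycles (adj_edge adj)) in
       (\<exists>k. halted P ((step P ^^ k) (init_conf adj))
            \<and> k \<le> C * (n ^ 2 + t) + C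
            \<and> lists_all_4cycles adj (outp ((step P ^^ k) (init_conf adj))))
       \<and> (\<forall>k a. \<bar>mem ((step P ^^ k) (init_conf adj)) a\<bar> \<le> int ((n + 2) ^ C)))"
proof (intro exI allI impI)
  fix adj assume valid: "valid_adj adj"
  obtain k where "k \<le> cost_listing adj + 5" "halted lister_prog ((step lister_prog ^^ k) (init_conf adj))"
    "outp ((step lister_prog ^^ k) (init_conf adj)) = encode_quads (cycle_listing adj)"
    "\<forall>j a. \<bar>mem ((step lister_prog ^^ j) (init_conf adj)) a\<bar> \<le> int ((length adj + 2) ^ 60000)"
    using lister_prog_correct[OF valid] by blast
  then show "let n = length adj; t = card (four_cycles (adj_edge adj)) in
       (\<exists>k. halted lister_prog ((step lister_prog ^^ k) (init_conf adj))
            \<and> k \<le> 60000 * (n ^ 2 + t) + 60000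
            \<and> lists_all_4cycles adj (outp ((step lister_prog ^^ k) (init_conf adj))))
       \<and> (\<forall>k a. \<bar>mem ((step lister_prog ^^ k) (init_conf adj)) a\<bar> \<le> int ((n + 2) ^ 60000))"
    using cost_listing_bound[OF valid] lists_all_4cycles_cycle_listing[OF valid]
    unfolding Let_def by (intro conjI exI[of _ k]) auto
qed

end
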